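(* Let $0<\alpha<1$ and let $\bar M^\alpha(t)=\bar M(D_\alpha(t))$ be the multivariate generalized space fractional counting process. Its Lévy measure $\Pi^\alpha$ (on $\mathbb{N}_0^q\setminus\{\bar0\}$) is given, for $A_1,\dots,A_q\subseteq\mathbb{N}_0$, by $$\Pi^\alpha(A_1\times\cdots\times A_q)=\frac{\alpha\lambda^\alpha}{\Gamma(1-\alpha)}\sum_{\bar n\succ\bar 0}\ \sum_{\substack{\Omega(k_i,n_i)\\ i=1,\dots,q}}\Gamma\Big(\sum_{i=1}^q\sum_{j=1}^{k_i}n_{ij}-\alpha\Big)\prod_{i=1}^q\prod_{j=1}^{k_i}\frac{(\lambda_{ij}/\lambda)^{n_{ij}}}{n_{ij}!}\,\mathbb{I}_{\{n_i\in A_i\}}.$$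
   Context: Fix $q\ge1$, integers $k_1,\dots,k_q\ge1$, $\lambda_{ij}>0$ ($1\le i\le q$, $1\le j\le k_i$), $\lambda=\sum_{i,j}\lambda_{ij}$. The MGCP $\bar M(t)=(M_1(t),\dots,M_q(t))$ is the $\mathbb{N}_0^q$-valued Lévy process with $\bar M(0)=\bar0$ whose components are independent and $\Pr\{\bar M(t)=\bar n\}=\prod_{i=1}^q\sum_{\Omega(k_i,n_i)}\prod_{j=1}^{k_i}\frac{(\lambda_{ij}t)^{n_{ij}}}{n_{ij}!}e^{-\lambda_{ij}t}$ (equivalently, transition probability $\lambda_{ij}h+o(h)$ of a jump of size $j$ in component $i$ only, $1-\lambda h+o(h)$ of no jump). $\{D_\alpha(t)\}$ is an $\alpha$-stable subordinator independent of $\bar M$, i.e. driftless with $\mathbb{E}e^{-sD_\alpha(t)}=e^{-ts^\alpha}$ and Lévy measure $\frac{\alpha}{\Gamma(1-\alpha)}s^{-\alpha-1}\mathrm{d}s$. $\Omega(k_i,n_i)=\{(n_{i1},\dots,n_{ik_i})\in\mathbb{N}_0^{k_i}:\sum_j jn_{ij}=n_i\}$; the inner sum runs over families $(n_{ij})$ with $(n_{i1},\dots,n_{ik_i})\in\Omega(k_i,n_i)$ for each $i$. $\bar n\succ\bar0$ means $\bar n\in\mathbb{N}_0^q$, $\bar n\ne\bar 0$. *)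

theory Defs
  imports "HOL-Probability.Probability"
begin

text \<open>Points of N_0^q are represented as functions nat => nat that vanish outside the
  index set {1..q}.\<close>
definition lattice :: "nat \<Rightarrow> (nat \<Rightarrow> nat) set" where
  "lattice q = {n. \<forall>i. i \<notin> {1..q} \<longrightarrow> n i = 0}"

definition Omega :: "nat \<Rightarrow> nat \<Rightarrow> (nat \<Rightarrow> nat) set" where
  "Omega k m = {v. (\<forall>j. j \<notin> {1..k} \<longrightarrow> v j = 0) \<and> (\<Sum>j=1..k. j * v j) = m}"

definition Omega_fam :: "nat \<Rightarrow> (nat \<Rightarrow> nat) \<Rightarrow> (nat \<Rightarrow> nat) \<Rightarrow> (nat \<Rightarrow> nat \<Rightarrow> nat) set" where
  "Omega_fam q k n = PiE {1..q} (\<lambda>i. Omega (k i) (n i))"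

definition lam_total :: "nat \<Rightarrow> (nat \<Rightarrow> nat) \<Rightarrow> (nat \<Rightarrow> nat \<Rightarrow> real) \<Rightarrow> real" where
  "lam_total q k lam = (\<Sum>i=1..q. \<Sum>j=1..k i. lam i j)"

definition mgcp_pmf :: "nat \<Rightarrow> (nat \<Rightarrow> nat) \<Rightarrow> (nat \<Rightarrow> nat \<Rightarrow> real) \<Rightarrow> real \<Rightarrow> (nat \<Rightarrow> nat) \<Rightarrow> real" where
  "mgcp_pmf q k lam s n =
     (\<Prod>i=1..q. \<Sum>v\<in>Omega (k i) (n i).
        \<Prod>j=1..k i. (lam i j * s) ^ v j / fact (v j) * exp (- lam i j * s))"

text \<open>mu t is the law of D_alpha(t): a probability distribution on [0,infinity) with
  Laplace transform exp(-t r^alpha).\<close>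
definition stable_subordinator_laws :: "real \<Rightarrow> (real \<Rightarrow> real measure) \<Rightarrow> bool" where
  "stable_subordinator_laws \<alpha> \<mu> \<longleftrightarrow>
     (\<forall>t\<ge>0. prob_space (\<mu> t) \<and> sets (\<mu> t) = sets borel \<and>
        (AE x in \<mu> t. 0 \<le> x) \<and>
        (\<forall>r\<ge>0. (\<integral>x. exp (- r * x) \<partial>\<mu> t) = exp (- t * r powr \<alpha>)))"

text \<open>Law of the subordinated process M(D_alpha(t)), with D_alpha independent of M:
  Pr{M(D_alpha(t)) = n} = E[ Pr{M(s) = n} at s = D_alpha(t) ].\<close>
definition subordinated_pmf ::
  "nat \<Rightarrow> (nat \<Rightarrow> nat) \<Rightarrow> (nat \<Rightarrow> nat \<Rightarrow> real) \<Rightarrow> (real \<Rightarrow> real measure) \<Rightarrow> real \<Rightarrow> (nat \<Rightarrow> nat) \<Rightarrow> real" where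
  "subordinated_pmf q k lam \<mu> t n = (\<integral>s. mgcp_pmf q k lam s n \<partial>\<mu> t)"

text \<open>pi is the Levy measure (given by its point masses on N_0^q \ {0}) of an N_0^q-valued
  Levy process with marginal laws p t: Levy-Khintchine formula (Laplace form, no drift,
  as the process is lattice valued):
  E exp(-<s,X(t)>) = exp(-t * sum_{n > 0} (1 - exp(-<s,n>)) pi(n)) for all s in [0,inf)^q.\<close>
definition is_levy_measure ::
  "nat \<Rightarrow> (real \<Rightarrow> (nat \<Rightarrow> nat) \<Rightarrow> real) \<Rightarrow> ((nat \<Rightarrow> nat) \<Rightarrow> real) \<Rightarrow> bool" where
  "is_levy_measure q p \<pi> \<longleftrightarrow>
     (\<forall>n\<in>lattice q - {\<lambda>_. 0}. 0 \<le> \<pi> n) \<and>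
     \<pi> summable_on (lattice q - {\<lambda>_. 0}) \<and>
     (\<forall>t\<ge>0. \<forall>s::nat \<Rightarrow> real. (\<forall>i\<in>{1..q}. 0 \<le> s i) \<longrightarrow>
        (\<Sum>\<^sub>\<infinity>n\<in>lattice q. p t n * exp (- (\<Sum>i=1..q. s i * real (n i)))) =
        exp (- t * (\<Sum>\<^sub>\<infinity>n\<in>lattice q - {\<lambda>_. 0}.
                      (1 - exp (- (\<Sum>i=1..q. s i * real (n i)))) * \<pi> n)))"

definition levy_measure_of :: "nat \<Rightarrow> ((nat \<Rightarrow> nat) \<Rightarrow> real) \<Rightarrow> (nat \<Rightarrow> nat) set \<Rightarrow> real" where
  "levy_measure_of q \<pi> B = (\<Sum>\<^sub>\<infinity>n\<in>B \<inter> (lattice q - {\<lambda>_. 0}). \<pi> n)"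

end

theory Submission
  imports Defs "HOL-Computational_Algebra.Primes"
begin

text \<open>
  The MGCP has Laplace exponent \<open>\<phi>(s) = \<Sum>i j. \<lambda>\<^sub>i\<^sub>j (1 - exp (- j s\<^sub>i))\<close>, so
  subordination gives \<open>E exp (- \<langle>s, M(D\<^sub>\<alpha>(t))\<rangle>) = exp (- t \<phi>(s) powr \<alpha>)\<close>.
  Writing \<open>\<phi> powr \<alpha> = \<integral> (1 - exp (- \<phi> u)) \<nu>(du)\<close> with the stable Levy measure
  \<open>\<nu>(du) = \<alpha> / \<Gamma>(1 - \<alpha>) u powr (- \<alpha> - 1) du\<close> and expanding \<open>exp (- \<phi> u)\<close> as the
  generating function of \<open>M(u)\<close> shows that \<open>\<pi>\<^sup>*(n) = \<integral> P(M(u) = n) \<nu>(du)\<close> satisfies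
  the Levy-Khintchine identity; the Gamma integrals \<open>\<integral> u powr (N - \<alpha> - 1) exp (- \<lambda> u) du\<close>
  turn this into the explicit formula. Any Levy measure \<open>\<pi>\<close> satisfies the same identity
  for all \<open>s \<ge> 0\<close>; at \<open>s\<^sub>i = \<sigma> ln p\<^sub>i\<close>, with \<open>p\<^sub>i\<close> the \<open>i\<close>-th prime, the difference of
  the two identities is a Dirichlet series in \<open>\<sigma>\<close> that vanishes identically, so its
  coefficients \<open>\<pi>(n) - \<pi>\<^sup>*(n)\<close> vanish.
\<close>

lemma has_sum_diff:
  fixes f g :: "'a \<Rightarrow> 'b::topological_ab_group_add"
  assumes "(f has_sum a) A" "(g has_sum b) A"
  shows "((\<lambda>x. f x - g x) has_sum (a - b)) A"
proof -
  have "((\<lambda>x. - g x) has_sum (- b)) A" using assms(2) by (simp add: has_sum_uminus)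
  from has_sum_add[OF assms(1) this] show ?thesis by simp
qed

lemma infsum_diff:
  fixes f g :: "'a \<Rightarrow> 'b::{topological_ab_group_add, t2_space}"
  assumes "f summable_on A" "g summable_on A"
  shows "(\<Sum>\<^sub>\<infinity>x\<in>A. f x - g x) = infsum f A - infsum g A"
  by (intro infsumI has_sum_diff has_sum_infsum assms)

lemma nn_integral_count_space_has_sum:
  fixes f :: "'a \<Rightarrow> real"
  assumes "(f has_sum r) A" "\<And>x. x \<in> A \<Longrightarrow> 0 \<le> f x"
  shows "(\<integral>\<^sup>+x. ennreal (f x) \<partial>count_space A) = ennreal r"
proof -
  have "(\<lambda>x. norm (f x)) summable_on A"
    using assms(1) summable_on_iff_abs_summable_on_real[of f A] by (auto simp: summable_on_def)
  then have summ: "Infinite_Set_Sum.abs_summable_on f A" by (rule abs_summable_equivalent[THEN iffD1])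
  have "(\<integral>\<^sup>+x. ennreal (f x) \<partial>count_space A) = ennreal (infsetsum f A)"
    by (rule nn_integral_conv_infsetsum[OF summ]) (use assms(2) in auto)
  also have "infsetsum f A = r" using infsetsum_infsum[OF summ] infsumI[OF assms(1)] by simp
  finally show ?thesis .
qed

lemma has_sum_nn_integral_count_space:
  fixes f :: "'a \<Rightarrow> real"
  assumes "(\<integral>\<^sup>+x. ennreal (f x) \<partial>count_space A) = ennreal r" "\<And>x. x \<in> A \<Longrightarrow> 0 \<le> f x" "r \<ge> 0"
  shows "(f has_sum r) A"
proof -
  have "integrable (count_space A) f"
    by (rule integrableI_nn_integral_finite[OF _ _ assms(1)]) (use assms(2) in \<open>auto simp: AE_count_space\<close>)
  then have summ: "Infinite_Set_Sum.abs_summable_on f A"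
    by (simp add: Infinite_Set_Sum.abs_summable_on_def)
  have "infsetsum f A = enn2real (\<integral>\<^sup>+x. ennreal (f x) \<partial>count_space A)"
    by (rule infsetsum_conv_nn_integral) (use assms in auto)
  with assms have "infsum f A = r" using infsetsum_infsum[OF summ] by simp
  moreover have "f summable_on A"
    by (rule summable_on_iff_abs_summable_on_real[THEN iffD2, OF abs_summable_equivalent[THEN iffD2, OF summ]])
  ultimately show ?thesis using has_sum_infsum by blast
qed

lemma summable_on_bounded_mult:
  fixes c d :: "'a \<Rightarrow> real"
  assumes "d summable_on S" "\<And>n. n \<in> S \<Longrightarrow> \<bar>c n\<bar> \<le> B"
  shows "(\<lambda>n. c n * d n) summable_on S"
proof -
  have "(\<lambda>n. \<bar>d n\<bar>) summable_on S"
    using summable_on_iff_abs_summable_on_real[THEN iffD1, OF assms(1)] by simp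
  then have "(\<lambda>n. B * \<bar>d n\<bar>) summable_on S" by (rule summable_on_cmult_right)
  then have "(\<lambda>n. norm (c n * d n)) summable_on S"
    by (rule Infinite_Sum.abs_summable_on_comparison_test')
       (use assms(2) in \<open>auto simp: abs_mult intro: mult_right_mono\<close>)
  then show ?thesis by (rule summable_on_iff_abs_summable_on_real[THEN iffD2])
qed

lemma abs_infsum_bounded_mult_le:
  fixes c d :: "'a \<Rightarrow> real"
  assumes "d summable_on S" "\<And>n. n \<in> S \<Longrightarrow> \<bar>c n\<bar> \<le> B"
  shows "\<bar>\<Sum>\<^sub>\<infinity>n\<in>S. c n * d n\<bar> \<le> B * (\<Sum>\<^sub>\<infinity>n\<in>S. \<bar>d n\<bar>)"
proof -
  have abs_d: "(\<lambda>n. \<bar>d n\<bar>) summable_on S"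
    using summable_on_iff_abs_summable_on_real[THEN iffD1, OF assms(1)] by simp
  have abs_cd: "(\<lambda>n. norm (c n * d n)) summable_on S"
    using summable_on_iff_abs_summable_on_real[THEN iffD1, OF summable_on_bounded_mult[OF assms]] .
  have "\<bar>\<Sum>\<^sub>\<infinity>n\<in>S. c n * d n\<bar> \<le> (\<Sum>\<^sub>\<infinity>n\<in>S. norm (c n * d n))"
    using norm_infsum_bound[OF abs_cd] by simp
  also have "\<dots> \<le> (\<Sum>\<^sub>\<infinity>n\<in>S. B * \<bar>d n\<bar>)"
    by (rule infsum_mono)
       (use abs_cd abs_d assms(2) in \<open>auto simp: abs_mult intro: summable_on_cmult_right mult_right_mono\<close>)
  also have "\<dots> = B * (\<Sum>\<^sub>\<infinity>n\<in>S. \<bar>d n\<bar>)" by (rule infsum_cmult_right')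
  finally show ?thesis .
qed

lemma bounded_by_geometric_imp_zero:
  fixes x r D :: real
  assumes "0 \<le> r" "r < 1" "\<And>N::nat. \<bar>x\<bar> \<le> r ^ N * D"
  shows "x = 0"
proof -
  have "(\<lambda>N. r ^ N * D) \<longlonglongrightarrow> 0 * D"
    by (intro tendsto_mult LIMSEQ_power_zero tendsto_const) (use assms in auto)
  then have "\<bar>x\<bar> \<le> 0 * D"
    by (intro tendsto_le[OF _ _ tendsto_const]) (use assms(3) in auto)
  then show ?thesis by simp
qed

section \<open>Uniqueness for generalised Dirichlet series\<close>

lemma dirichlet_series_eq_0:
  fixes d :: "'a \<Rightarrow> real" and m :: "'a \<Rightarrow> nat"
  assumes summ: "d summable_on S" and m2: "\<And>n. n \<in> S \<Longrightarrow> m n \<ge> 2"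
    and eq: "\<And>\<sigma>::nat. (\<Sum>\<^sub>\<infinity>n\<in>S. (1 - (1 / real (m n)) ^ \<sigma>) * d n) = 0"
  shows "(\<Sum>\<^sub>\<infinity>n\<in>S. (1 / real (m n)) ^ \<sigma> * d n) = 0"
proof -
  have "\<bar>(1 / real (m n)) ^ \<sigma>\<bar> \<le> 1" if "n \<in> S" for n \<sigma>
    using m2[OF that] by (auto simp: power_le_one)
  then have summ_pow: "(\<lambda>n. (1 / real (m n)) ^ \<sigma> * d n) summable_on S" for \<sigma>
    by (rule summable_on_bounded_mult[OF summ])
  have const: "(\<Sum>\<^sub>\<infinity>n\<in>S. (1 / real (m n)) ^ \<sigma> * d n) = (\<Sum>\<^sub>\<infinity>n\<in>S. d n)" for \<sigma>
  proof -
    have "0 = (\<Sum>\<^sub>\<infinity>n\<in>S. d n - (1 / real (m n)) ^ \<sigma> * d n)"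
      using eq[of \<sigma>] by (simp add: algebra_simps)
    also have "\<dots> = (\<Sum>\<^sub>\<infinity>n\<in>S. d n) - (\<Sum>\<^sub>\<infinity>n\<in>S. (1 / real (m n)) ^ \<sigma> * d n)"
      by (rule infsum_diff[OF summ summ_pow])
    finally show ?thesis by simp
  qed
  \<comment> \<open>letting \<open>\<sigma> \<rightarrow> \<infinity>\<close> in this constant series shows that it vanishes\<close>
  have "(\<Sum>\<^sub>\<infinity>n\<in>S. d n) = 0"
  proof (rule bounded_by_geometric_imp_zero[of "1/2" _ "\<Sum>\<^sub>\<infinity>n\<in>S. \<bar>d n\<bar>"])
    fix N :: nat
    have "\<bar>(1 / real (m n)) ^ N\<bar> \<le> (1/2) ^ N" if "n \<in> S" for n
      using m2[OF that] by (auto simp: power_mono frac_le)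
    from abs_infsum_bounded_mult_le[of d S "\<lambda>n. (1 / real (m n)) ^ N", OF summ this] const[of N]
    show "\<bar>\<Sum>\<^sub>\<infinity>n\<in>S. d n\<bar> \<le> (1/2) ^ N * (\<Sum>\<^sub>\<infinity>n\<in>S. \<bar>d n\<bar>)" by simp
  qed auto
  then show ?thesis using const by simp
qed

lemma dirichlet_series_leading_coeff_eq:
  fixes d :: "'a \<Rightarrow> real" and m :: "'a \<Rightarrow> nat"
  assumes summ: "d summable_on S" and inj: "inj_on m S" and m2: "\<And>n. n \<in> S \<Longrightarrow> m n \<ge> 2"
    and zero: "(\<Sum>\<^sub>\<infinity>n\<in>S. (1 / real (m n)) ^ N * d n) = 0"
    and n0: "n0 \<in> S" and below: "\<And>n. n \<in> S \<Longrightarrow> m n < m n0 \<Longrightarrow> d n = 0"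
  shows "d n0 = - (\<Sum>\<^sub>\<infinity>n\<in>{n\<in>S. m n > m n0}. (real (m n0) / real (m n)) ^ N * d n)"
proof -
  define M where "M = m n0"
  define S1 where "S1 = {n\<in>S. m n > M}"
  have M2: "M \<ge> 2" using m2[OF n0] by (simp add: M_def)
  have "\<bar>(1 / real (m n)) ^ N\<bar> \<le> 1" if "n \<in> S1" for n
    using m2 that by (auto simp: S1_def power_le_one)
  then have summ1: "(\<lambda>n. (1 / real (m n)) ^ N * d n) summable_on S1"
    by (intro summable_on_bounded_mult summable_on_subset[OF summ]) (auto simp: S1_def)
  have "0 = (\<Sum>\<^sub>\<infinity>n\<in>insert n0 S1. (1 / real (m n)) ^ N * d n)"
    unfolding zero[symmetric]
  proof (rule infsum_cong_neutral)
    fix n assume n: "n \<in> S - insert n0 S1"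
    show "(1 / real (m n)) ^ N * d n = 0"
    proof (cases "m n < M")
      case False
      then have "n = n0" using n inj n0 by (auto simp: S1_def M_def dest: inj_onD)
      then show ?thesis using n by simp
    qed (use below n in \<open>auto simp: M_def\<close>)
  qed (use n0 in \<open>auto simp: S1_def\<close>)
  also have "\<dots> = (1 / real M) ^ N * d n0 + (\<Sum>\<^sub>\<infinity>n\<in>S1. (1 / real (m n)) ^ N * d n)"
    by (subst infsum_insert) (use summ1 in \<open>auto simp: S1_def M_def\<close>)
  finally have "real M ^ N * ((1 / real M) ^ N * d n0)
      = real M ^ N * - (\<Sum>\<^sub>\<infinity>n\<in>S1. (1 / real (m n)) ^ N * d n)"
    by (simp add: eq_neg_iff_add_eq_0 flip: distrib_left)
  then have "d n0 = - (real M ^ N * (\<Sum>\<^sub>\<infinity>n\<in>S1. (1 / real (m n)) ^ N * d n))"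
    using M2 by (simp add: power_one_over mult.assoc[symmetric])
  also have "\<dots> = - (\<Sum>\<^sub>\<infinity>n\<in>S1. (real M / real (m n)) ^ N * d n)"
    by (subst infsum_cmult_right'[symmetric]) (simp add: power_divide)
  finally show ?thesis by (simp add: S1_def M_def)
qed

lemma dirichlet_series_leading_coeff_bound:
  fixes d :: "'a \<Rightarrow> real" and m :: "'a \<Rightarrow> nat"
  assumes summ: "d summable_on S" and inj: "inj_on m S" and m2: "\<And>n. n \<in> S \<Longrightarrow> m n \<ge> 2"
    and zero: "(\<Sum>\<^sub>\<infinity>n\<in>S. (1 / real (m n)) ^ N * d n) = 0"
    and n0: "n0 \<in> S" and below: "\<And>n. n \<in> S \<Longrightarrow> m n < m n0 \<Longrightarrow> d n = 0"
  shows "\<bar>d n0\<bar> \<le> (real (m n0) / real (m n0 + 1)) ^ N * (\<Sum>\<^sub>\<infinity>n\<in>S. \<bar>d n\<bar>)"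
proof -
  define S1 where "S1 = {n\<in>S. m n > m n0}"
  have summ1: "d summable_on S1" using summ by (rule summable_on_subset) (auto simp: S1_def)
  have "\<bar>d n0\<bar> = \<bar>\<Sum>\<^sub>\<infinity>n\<in>S1. (real (m n0) / real (m n)) ^ N * d n\<bar>"
    using dirichlet_series_leading_coeff_eq[OF summ inj m2 zero n0 below] by (simp add: S1_def)
  also have "\<dots> \<le> (real (m n0) / real (m n0 + 1)) ^ N * (\<Sum>\<^sub>\<infinity>n\<in>S1. \<bar>d n\<bar>)"
  proof (rule abs_infsum_bounded_mult_le[OF summ1])
    fix n assume "n \<in> S1"
    then have "real (m n0) / real (m n) \<le> real (m n0) / real (m n0 + 1)"
      by (intro divide_left_mono) (auto simp: S1_def)
    then show "\<bar>(real (m n0) / real (m n)) ^ N\<bar> \<le> (real (m n0) / real (m n0 + 1)) ^ N"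
      by (auto intro: power_mono)
  qed
  also have "(\<Sum>\<^sub>\<infinity>n\<in>S1. \<bar>d n\<bar>) \<le> (\<Sum>\<^sub>\<infinity>n\<in>S. \<bar>d n\<bar>)"
  proof (rule infsum_mono_neutral)
    show "(\<lambda>n. \<bar>d n\<bar>) summable_on S1" "(\<lambda>n. \<bar>d n\<bar>) summable_on S"
      using summable_on_iff_abs_summable_on_real[THEN iffD1, OF summ1]
        summable_on_iff_abs_summable_on_real[THEN iffD1, OF summ] by simp_all
  qed (auto simp: S1_def)
  finally show ?thesis by (simp add: mult_left_mono)
qed

lemma dirichlet_series_unique:
  fixes d :: "'a \<Rightarrow> real" and m :: "'a \<Rightarrow> nat"
  assumes summ: "d summable_on S" and inj: "inj_on m S" and m2: "\<And>n. n \<in> S \<Longrightarrow> m n \<ge> 2"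
    and eq: "\<And>\<sigma>::nat. (\<Sum>\<^sub>\<infinity>n\<in>S. (1 - (1 / real (m n)) ^ \<sigma>) * d n) = 0"
    and n: "n \<in> S"
  shows "d n = 0"
proof -
  note zero = dirichlet_series_eq_0[OF summ m2 eq]
  have "\<forall>n\<in>S. m n = M \<longrightarrow> d n = 0" for M
  proof (induction M rule: less_induct)
    case (less M)
    show ?case
    proof (intro ballI impI)
      fix n0 assume n0: "n0 \<in> S" "m n0 = M"
      have "d n = 0" if "n \<in> S" "m n < m n0" for n
        using less.IH[of "m n"] that n0 by blast
      from dirichlet_series_leading_coeff_bound[OF summ inj m2 zero n0(1) this]
      show "d n0 = 0"
        by (intro bounded_by_geometric_imp_zero[of "real M / real (M + 1)" _ "\<Sum>\<^sub>\<infinity>n\<in>S. \<bar>d n\<bar>"])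
           (simp_all add: n0(2))
    qed
  qed
  then show ?thesis using n by blast
qed

section \<open>Lattice sums and the generating function of the MGCP\<close>

lemma bij_betw_PiE_lattice:
  "bij_betw (\<lambda>g i. if i \<in> {1..q} then g i else 0) (PiE {1..q} (\<lambda>_. UNIV)) (lattice q)"
proof (rule bij_betwI[where g="\<lambda>n. restrict n {1..q}"])
  fix g :: "nat \<Rightarrow> nat" assume "g \<in> PiE {1..q} (\<lambda>_. UNIV)"
  then show "restrict (\<lambda>i. if i \<in> {1..q} then g i else 0) {1..q} = g"
    by (auto simp: fun_eq_iff PiE_def extensional_def)
next
  fix n assume "n \<in> lattice q"
  then show "(\<lambda>i. if i \<in> {1..q} then restrict n {1..q} i else 0) = n"
    by (auto simp: fun_eq_iff lattice_def)
qed (auto simp: lattice_def)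

lemma countable_lattice: "countable (lattice q)"
proof -
  have "lattice q = (\<lambda>g i. if i \<in> {1..q} then g i else 0) ` PiE {1..q} (\<lambda>_. UNIV)"
    using bij_betw_PiE_lattice[of q] by (simp add: bij_betw_def)
  moreover have "countable (PiE {1..q} (\<lambda>_. UNIV :: nat set))" by (intro countable_PiE) auto
  ultimately show ?thesis by simp
qed

lemma has_sum_prod_lattice:
  fixes h :: "nat \<Rightarrow> nat \<Rightarrow> real"
  assumes "\<And>i. i \<in> {1..q} \<Longrightarrow> (h i has_sum H i) UNIV"
  shows "((\<lambda>n. \<Prod>i=1..q. h i (n i)) has_sum (\<Prod>i=1..q. H i)) (lattice q)"
proof -
  let ?P = "PiE {1..q} (\<lambda>_. UNIV :: nat set)"
  have abs_summable: "(\<lambda>x. norm (h i x)) summable_on UNIV" if "i \<in> {1..q}" for i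
    using assms[OF that] summable_on_iff_abs_summable_on_real by (auto simp: summable_on_def)
  have "Infinite_Set_Sum.abs_summable_on (\<lambda>g. \<Prod>i=1..q. h i (g i)) ?P"
    by (rule abs_summable_on_prod_PiE) (auto intro: abs_summable_equivalent[THEN iffD1, OF abs_summable])
  then have "(\<lambda>g. \<Prod>i=1..q. h i (g i)) summable_on ?P"
    by (rule summable_on_iff_abs_summable_on_real[THEN iffD2, OF abs_summable_equivalent[THEN iffD2]])
  moreover have "infsum (\<lambda>g. \<Prod>i=1..q. h i (g i)) ?P = (\<Prod>i=1..q. infsum (h i) UNIV)"
    by (rule infsum_prod_PiE_abs) (use abs_summable in auto)
  moreover have "(\<Prod>i=1..q. infsum (h i) UNIV) = (\<Prod>i=1..q. H i)"
    using assms by (auto intro!: prod.cong infsumI)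
  ultimately have "((\<lambda>g. \<Prod>i=1..q. h i (g i)) has_sum (\<Prod>i=1..q. H i)) ?P"
    using has_sum_infsum by metis
  then have "((\<lambda>g. \<Prod>i=1..q. h i (if i \<in> {1..q} then g i else 0)) has_sum (\<Prod>i=1..q. H i)) ?P"
    by (rule has_sum_cong[THEN iffD1, rotated]) (auto intro!: prod.cong)
  then show ?thesis
    using has_sum_reindex_bij_betw[OF bij_betw_PiE_lattice[of q], where f="\<lambda>n. \<Prod>i=1..q. h i (n i)"]
    by simp
qed

lemma has_sum_exp_series:
  fixes c :: real
  assumes "c \<ge> 0"
  shows "((\<lambda>x. c ^ x / fact x) has_sum exp c) UNIV"
proof -
  have "(\<lambda>x. c ^ x / fact x) sums exp c"
    using exp_converges[of c] by (simp add: divide_inverse_commute scaleR_conv_of_real)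
  then show ?thesis by (rule sums_nonneg_imp_has_sum) (use assms in auto)
qed

lemma finite_Omega: "finite (Omega k m)"
proof -
  have "Omega k m \<subseteq> (\<lambda>g i. if i \<in> {1..k} then g i else 0) ` PiE {1..k} (\<lambda>_. {0..m})"
  proof
    fix v assume v: "v \<in> Omega k m"
    have "v j \<le> m" if "j \<in> {1..k}" for j
    proof -
      have "v j \<le> j * v j" using that by simp
      also have "\<dots> \<le> (\<Sum>j=1..k. j * v j)" by (rule member_le_sum) (use that in auto)
      finally show ?thesis using v by (simp add: Omega_def)
    qed
    then have "restrict v {1..k} \<in> PiE {1..k} (\<lambda>_. {0..m})" by auto
    moreover have "v = (\<lambda>i. if i \<in> {1..k} then restrict v {1..k} i else 0)"
      using v by (auto simp: Omega_def fun_eq_iff)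
    ultimately show "v \<in> (\<lambda>g i. if i \<in> {1..k} then g i else 0) ` PiE {1..k} (\<lambda>_. {0..m})"
      by blast
  qed
  then show ?thesis by (rule finite_subset) (intro finite_imageI finite_PiE, auto)
qed

lemma has_sum_regroup_Omega:
  fixes F :: "(nat \<Rightarrow> nat) \<Rightarrow> real"
  assumes "(F has_sum T) (lattice k)"
  shows "((\<lambda>m. \<Sum>v\<in>Omega k m. F v) has_sum T) UNIV"
proof -
  have bij: "bij_betw snd (Sigma UNIV (Omega k)) (lattice k)"
    by (rule bij_betwI[where g="\<lambda>v. (\<Sum>j=1..k. j * v j, v)"])
       (auto simp: Omega_def lattice_def)
  have "((\<lambda>(m, v). F v) has_sum T) (Sigma UNIV (Omega k))"
    using has_sum_reindex_bij_betw[OF bij, of F T] assms by (simp add: case_prod_unfold)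
  then show ?thesis
    by (rule has_sum_Sigma') (auto intro: has_sum_finite finite_Omega)
qed

lemma exp_Omega:
  assumes "v \<in> Omega k m"
  shows "exp (- s * real m) = (\<Prod>j=1..k. exp (- (real j * s)) ^ v j)"
proof -
  have "m = (\<Sum>j=1..k. j * v j)" using assms by (simp add: Omega_def)
  then have "real m = (\<Sum>j=1..k. real j * real (v j))" by simp
  then have "- s * real m = (\<Sum>j=1..k. real (v j) * - (real j * s))"
    by (simp add: sum_distrib_left algebra_simps)
  then show ?thesis by (simp add: exp_sum flip: exp_of_nat_mult)
qed

definition mgcp_laplace_exponent ::
  "nat \<Rightarrow> (nat \<Rightarrow> nat) \<Rightarrow> (nat \<Rightarrow> nat \<Rightarrow> real) \<Rightarrow> (nat \<Rightarrow> real) \<Rightarrow> real" where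
  "mgcp_laplace_exponent q k lam s =
     (\<Sum>i=1..q. \<Sum>j=1..k i. lam i j * (1 - exp (- (real j * s i))))"

lemma mgcp_laplace_exponent_nonneg:
  assumes "\<And>i j. i \<in> {1..q} \<Longrightarrow> j \<in> {1..k i} \<Longrightarrow> lam i j \<ge> 0"
    and "\<And>i. i \<in> {1..q} \<Longrightarrow> s i \<ge> 0"
  shows "mgcp_laplace_exponent q k lam s \<ge> 0"
  unfolding mgcp_laplace_exponent_def using assms by (intro sum_nonneg mult_nonneg_nonneg) auto

lemma has_sum_gcp_laplace:
  fixes lam :: "nat \<Rightarrow> real" and u s :: real
  assumes lam: "\<And>j. j \<in> {1..k} \<Longrightarrow> lam j \<ge> 0" and u: "u \<ge> 0"
  shows "((\<lambda>m. (\<Sum>v\<in>Omega k m. \<Prod>j=1..k. (lam j * u) ^ v j / fact (v j) * exp (- lam j * u))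
             * exp (- s * real m))
          has_sum (\<Prod>j=1..k. exp (- lam j * u * (1 - exp (- (real j * s)))))) UNIV"
proof -
  define w where "w j x = (lam j * u * exp (- (real j * s))) ^ x / fact x * exp (- lam j * u)" for j x
  have "(w j has_sum exp (lam j * u * exp (- (real j * s))) * exp (- lam j * u)) UNIV"
    if "j \<in> {1..k}" for j
    unfolding w_def by (intro has_sum_cmult_left has_sum_exp_series) (use lam[OF that] u in auto)
  then have "((\<lambda>v. \<Prod>j=1..k. w j (v j)) has_sum
      (\<Prod>j=1..k. exp (lam j * u * exp (- (real j * s))) * exp (- lam j * u))) (lattice k)"
    by (rule has_sum_prod_lattice)
  then have "((\<lambda>m. \<Sum>v\<in>Omega k m. \<Prod>j=1..k. w j (v j)) has_sum
      (\<Prod>j=1..k. exp (lam j * u * exp (- (real j * s))) * exp (- lam j * u))) UNIV"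
    by (rule has_sum_regroup_Omega)
  moreover have "(\<Prod>j=1..k. w j (v j)) =
      (\<Prod>j=1..k. (lam j * u) ^ v j / fact (v j) * exp (- lam j * u)) * exp (- s * real m)"
    if "v \<in> Omega k m" for v m
  proof -
    have "(\<Prod>j=1..k. w j (v j)) = (\<Prod>j=1..k.
        ((lam j * u) ^ v j / fact (v j) * exp (- lam j * u)) * exp (- (real j * s)) ^ v j)"
      by (intro prod.cong refl) (simp add: w_def power_mult_distrib mult_ac)
    also have "\<dots> = (\<Prod>j=1..k. (lam j * u) ^ v j / fact (v j) * exp (- lam j * u))
        * (\<Prod>j=1..k. exp (- (real j * s)) ^ v j)"
      by (rule prod.distrib)
    finally show ?thesis by (simp only: exp_Omega[OF that])
  qed
  moreover have "exp (lam j * u * exp (- (real j * s))) * exp (- lam j * u)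
      = exp (- lam j * u * (1 - exp (- (real j * s))))" for j
    by (simp add: exp_add[symmetric] algebra_simps)
  ultimately show ?thesis by (simp add: sum_distrib_right)
qed

lemma has_sum_mgcp_laplace:
  assumes lam: "\<And>i j. i \<in> {1..q} \<Longrightarrow> j \<in> {1..k i} \<Longrightarrow> lam i j \<ge> 0" and u: "u \<ge> 0"
  shows "((\<lambda>n. mgcp_pmf q k lam u n * exp (- (\<Sum>i=1..q. s i * real (n i))))
           has_sum exp (- u * mgcp_laplace_exponent q k lam s)) (lattice q)"
proof -
  define h where "h i m = (\<Sum>v\<in>Omega (k i) m.
      \<Prod>j=1..k i. (lam i j * u) ^ v j / fact (v j) * exp (- lam i j * u)) * exp (- s i * real m)"
    for i m
  have "((\<lambda>n. \<Prod>i=1..q. h i (n i)) has_sum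
      (\<Prod>i=1..q. \<Prod>j=1..k i. exp (- lam i j * u * (1 - exp (- (real j * s i)))))) (lattice q)"
    unfolding h_def by (intro has_sum_prod_lattice has_sum_gcp_laplace) (use lam u in auto)
  moreover have "(\<Prod>i=1..q. h i (n i)) = mgcp_pmf q k lam u n * exp (- (\<Sum>i=1..q. s i * real (n i)))"
    for n
    by (simp add: h_def mgcp_pmf_def prod.distrib exp_sum flip: sum_negf)
  moreover have "(\<Prod>i=1..q. \<Prod>j=1..k i. exp (- lam i j * u * (1 - exp (- (real j * s i)))))
      = exp (- u * mgcp_laplace_exponent q k lam s)"
    by (simp add: mgcp_laplace_exponent_def exp_sum sum_distrib_left flip: sum_negf)
       (simp add: algebra_simps)
  ultimately show ?thesis by simp
qed

lemma mgcp_pmf_nonneg: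
  assumes "\<And>i j. i \<in> {1..q} \<Longrightarrow> j \<in> {1..k i} \<Longrightarrow> lam i j \<ge> 0" and "u \<ge> 0"
  shows "mgcp_pmf q k lam u n \<ge> 0"
  unfolding mgcp_pmf_def using assms
  by (intro prod_nonneg sum_nonneg mult_nonneg_nonneg divide_nonneg_nonneg zero_le_power) auto

lemma mgcp_pmf_measurable [measurable]: "(\<lambda>u. mgcp_pmf q k lam u n) \<in> borel_measurable borel"
  unfolding mgcp_pmf_def by measurable

lemma has_sum_mgcp_pmf:
  assumes "\<And>i j. i \<in> {1..q} \<Longrightarrow> j \<in> {1..k i} \<Longrightarrow> lam i j \<ge> 0" and "u \<ge> 0"
  shows "(mgcp_pmf q k lam u has_sum 1) (lattice q)"
  using has_sum_mgcp_laplace[OF assms, where s="\<lambda>_. 0"] by (simp add: mgcp_laplace_exponent_def)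

lemma mgcp_pmf_le_1:
  assumes lam: "\<And>i j. i \<in> {1..q} \<Longrightarrow> j \<in> {1..k i} \<Longrightarrow> lam i j \<ge> 0" and u: "u \<ge> 0"
    and n: "n \<in> lattice q"
  shows "mgcp_pmf q k lam u n \<le> 1"
proof -
  have sum1: "(mgcp_pmf q k lam u has_sum 1) (lattice q)" using lam u by (rule has_sum_mgcp_pmf)
  have "infsum (mgcp_pmf q k lam u) {n} \<le> infsum (mgcp_pmf q k lam u) (lattice q)"
    using sum1 mgcp_pmf_nonneg[of q k lam u] lam u n
    by (intro infsum_mono_neutral) (auto simp: summable_on_def intro: has_sum_finite)
  then show ?thesis using infsumI[OF sum1] by simp
qed

section \<open>Integrals against the stable Levy measure\<close>

lemma nn_integral_powr_exp_Gamma: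
  fixes a b :: real
  assumes a: "a > 0" and b: "b > 0"
  shows "(\<integral>\<^sup>+x. ennreal (indicator {0<..} x * x powr (a - 1) * exp (- (b * x))) \<partial>lborel)
         = ennreal (Gamma a / b powr a)"
proof -
  define f where "f x = ennreal (indicator {0<..} x * x powr (a - 1) * exp (- (b * x)))" for x
  have "f \<in> borel_measurable borel" unfolding f_def by measurable
  then have "integral\<^sup>N lborel f = ennreal (1 / b) * (\<integral>\<^sup>+x. f (0 + (1 / b) * x) \<partial>lborel)"
    using nn_integral_real_affine[of f "1 / b" 0] b by simp
  also have "(\<lambda>x. f (0 + (1 / b) * x))
      = (\<lambda>x. ennreal (b powr (1 - a)) * ennreal (indicator {0..} x * x powr (a - 1) / exp x))"
  proof
    fix x :: real
    show "f (0 + (1 / b) * x)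
        = ennreal (b powr (1 - a)) * ennreal (indicator {0..} x * x powr (a - 1) / exp x)"
    proof (cases "x > 0")
      case True
      have "(x / b) powr (a - 1) = b powr (1 - a) * x powr (a - 1)"
        using True b by (simp add: powr_divide powr_minus_divide[of b "a - 1", simplified])
      then have "f (0 + (1 / b) * x) = ennreal (b powr (1 - a) * (x powr (a - 1) / exp x))"
        unfolding f_def using True b by (simp add: exp_minus field_simps)
      then show ?thesis using True ennreal_mult'[of "b powr (1 - a)" "x powr (a - 1) / exp x"] by simp
    next
      case False
      then show ?thesis using b by (cases "x = 0") (auto simp: f_def indicator_def zero_less_divide_iff)
    qed
  qed
  also have "(\<integral>\<^sup>+x. ennreal (b powr (1 - a)) * ennreal (indicator {0..} x * x powr (a - 1) / exp x) \<partial>lborel)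
      = ennreal (b powr (1 - a)) * ennreal (Gamma a)"
    by (subst nn_integral_cmult) (auto simp: Gamma_conv_nn_integral_real[OF a])
  also have "ennreal (1 / b) * (ennreal (b powr (1 - a)) * ennreal (Gamma a)) = ennreal (Gamma a / b powr a)"
    using b Gamma_real_pos[OF a] by (simp add: ennreal_mult[symmetric] powr_diff)
  finally show ?thesis by (simp add: f_def)
qed

lemma nn_integral_powr_atLeast:
  fixes y \<alpha> :: real
  assumes y: "y > 0" and \<alpha>: "\<alpha> > 0"
  shows "(\<integral>\<^sup>+x. ennreal (x powr (- \<alpha> - 1)) * indicator {y..} x \<partial>lborel) = ennreal (y powr (- \<alpha>) / \<alpha>)"
proof -
  have "(\<integral>\<^sup>+x. ennreal (x powr (- \<alpha> - 1)) * indicator {y..} x \<partial>lborel)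
      = ennreal (0 - (- (y powr (- \<alpha>)) / \<alpha>))"
  proof (rule nn_integral_FTC_atLeast)
    fix x assume "y \<le> x"
    then have "x > 0" using y by simp
    then have "((\<lambda>x. - (x powr (- \<alpha>)) / \<alpha>) has_real_derivative (- ((- \<alpha>) * x powr (- \<alpha> - 1))) / \<alpha>) (at x)"
      by (intro DERIV_cdivide DERIV_minus has_real_derivative_powr) auto
    then show "((\<lambda>x. - (x powr (- \<alpha>)) / \<alpha>) has_real_derivative x powr (- \<alpha> - 1)) (at x)"
      using \<alpha> by simp
  next
    show "((\<lambda>x. - (x powr (- \<alpha>)) / \<alpha>) \<longlongrightarrow> 0) at_top"
      using \<alpha> by real_asymp
  qed auto
  then show ?thesis by simp
qed

lemma one_minus_exp_eq_nn_integral: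
  fixes x c :: real
  assumes x: "x \<ge> 0" and c: "c \<ge> 0"
  shows "ennreal (1 - exp (- (c * x)))
       = (\<integral>\<^sup>+y. ennreal (c * exp (- (c * y))) * indicator {0..x} y \<partial>lborel)"
proof -
  have "((\<lambda>y. c * exp (- (c * y))) has_integral (- exp (- (c * x))) - (- exp (- (c * 0)))) {0..x}"
    by (intro fundamental_theorem_of_calculus x)
       (auto intro!: derivative_eq_intros simp flip: has_real_derivative_iff_has_vector_derivative)
  then have "((\<lambda>y. c * exp (- (c * y))) has_integral 1 - exp (- (c * x))) {0..x}" by simp
  moreover have "(\<lambda>y. indicator {0..x} y * (c * exp (- (c * y))))
      = (\<lambda>y. if y \<in> {0..x} then c * exp (- (c * y)) else 0)"
    by (auto simp: indicator_def fun_eq_iff)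
  ultimately have "((\<lambda>y. indicator {0..x} y * (c * exp (- (c * y)))) has_integral 1 - exp (- (c * x))) UNIV"
    using has_integral_restrict_UNIV[of "{0..x}" "\<lambda>y. c * exp (- (c * y))"] by simp
  then have "(\<integral>\<^sup>+y. ennreal (indicator {0..x} y * (c * exp (- (c * y)))) \<partial>lborel)
      = ennreal (1 - exp (- (c * x)))"
    by (rule nn_integral_has_integral_lborel[rotated 2]) (use c in auto)
  then show ?thesis by (simp add: ennreal_mult' mult.commute ennreal_indicator)
qed

lemma stable_levy_integrand_eq_nn_integral:
  fixes x c \<alpha> :: real
  assumes "c \<ge> 0"
  shows "ennreal (indicator {0<..} x * x powr (- \<alpha> - 1) * (1 - exp (- (c * x))))
       = (\<integral>\<^sup>+y. ennreal (indicator {0<..} x * x powr (- \<alpha> - 1))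
                 * (ennreal (c * exp (- (c * y))) * indicator {0..x} y) \<partial>lborel)"
proof (cases "x > 0")
  case True
  then have "ennreal (indicator {0<..} x * x powr (- \<alpha> - 1) * (1 - exp (- (c * x))))
      = ennreal (indicator {0<..} x * x powr (- \<alpha> - 1)) * ennreal (1 - exp (- (c * x)))"
    using assms by (intro ennreal_mult) auto
  then show ?thesis
    using True assms by (simp add: one_minus_exp_eq_nn_integral nn_integral_cmult)
qed simp

lemma nn_integral_powr_one_minus_exp:
  fixes \<alpha> c :: real
  assumes \<alpha>: "0 < \<alpha>" "\<alpha> < 1" and c: "c \<ge> 0"
  shows "(\<integral>\<^sup>+x. ennreal (indicator {0<..} x * x powr (- \<alpha> - 1) * (1 - exp (- (c * x)))) \<partial>lborel)
         = ennreal (c powr \<alpha> * Gamma (1 - \<alpha>) / \<alpha>)"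
proof (cases "c = 0")
  case False
  with c have c: "c > 0" by simp
  define K where "K x y = ennreal (indicator {0<..} x * x powr (- \<alpha> - 1))
      * (ennreal (c * exp (- (c * y))) * indicator {0..x} y)" for x y :: real
  \<comment> \<open>Tonelli: integrate the kernel first in \<open>x \<ge> y\<close>, then in \<open>y\<close>\<close>
  have inner: "(\<integral>\<^sup>+x. K x y \<partial>lborel)
      = ennreal (c / \<alpha>) * ennreal (indicator {0<..} y * y powr ((1 - \<alpha>) - 1) * exp (- (c * y)))"
    if y: "y \<noteq> 0" for y
  proof (cases "y > 0")
    case True
    have "(\<integral>\<^sup>+x. K x y \<partial>lborel)
        = (\<integral>\<^sup>+x. ennreal (x powr (- \<alpha> - 1)) * indicator {y..} x * ennreal (c * exp (- (c * y))) \<partial>lborel)"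
      by (rule nn_integral_cong) (use True in \<open>auto simp: K_def indicator_def\<close>)
    also have "\<dots> = ennreal (y powr (- \<alpha>) / \<alpha>) * ennreal (c * exp (- (c * y)))"
      by (subst nn_integral_multc) (auto simp: nn_integral_powr_atLeast[OF True \<alpha>(1)])
    also have "\<dots> = ennreal (c / \<alpha>) * ennreal (indicator {0<..} y * y powr ((1 - \<alpha>) - 1) * exp (- (c * y)))"
      using True c \<alpha> by (simp add: ennreal_mult'[symmetric] mult_ac)
    finally show ?thesis .
  next
    case False
    with y show ?thesis by (simp add: K_def)
  qed
  have "(\<integral>\<^sup>+x. ennreal (indicator {0<..} x * x powr (- \<alpha> - 1) * (1 - exp (- (c * x)))) \<partial>lborel)
      = (\<integral>\<^sup>+x. (\<integral>\<^sup>+y. K x y \<partial>lborel) \<partial>lborel)"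
    unfolding K_def using c by (simp add: stable_levy_integrand_eq_nn_integral)
  also have "\<dots> = (\<integral>\<^sup>+y. (\<integral>\<^sup>+x. K x y \<partial>lborel) \<partial>lborel)"
    by (rule lborel_pair.Fubini'[symmetric]) (unfold K_def indicator_def atLeastAtMost_iff, measurable)
  also have "\<dots> = (\<integral>\<^sup>+y. ennreal (c / \<alpha>)
      * ennreal (indicator {0<..} y * y powr ((1 - \<alpha>) - 1) * exp (- (c * y))) \<partial>lborel)"
    using AE_lborel_singleton[of 0] by (intro nn_integral_cong_AE) (auto simp: inner)
  also have "\<dots> = ennreal (c / \<alpha>) * ennreal (Gamma (1 - \<alpha>) / c powr (1 - \<alpha>))"
    using nn_integral_powr_exp_Gamma[of "1 - \<alpha>" c] \<alpha> c by (subst nn_integral_cmult) simp_all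
  also have "\<dots> = ennreal (c powr \<alpha> * Gamma (1 - \<alpha>) / \<alpha>)"
    using c \<alpha> Gamma_real_pos[of "1 - \<alpha>"] by (simp add: ennreal_mult'[symmetric] powr_diff)
  finally show ?thesis .
qed simp

definition stable_levy_density :: "real \<Rightarrow> real \<Rightarrow> real" where
  "stable_levy_density \<alpha> u = \<alpha> / Gamma (1 - \<alpha>) * indicator {0<..} u * u powr (- \<alpha> - 1)"

lemma nn_integral_stable_levy_density_mult:
  assumes "0 < \<alpha>" "\<alpha> < 1" and [measurable]: "f \<in> borel_measurable borel"
  shows "(\<integral>\<^sup>+u. ennreal (stable_levy_density \<alpha> u * f u) \<partial>lborel)
       = ennreal (\<alpha> / Gamma (1 - \<alpha>)) * (\<integral>\<^sup>+u. ennreal (indicator {0<..} u * u powr (- \<alpha> - 1) * f u) \<partial>lborel)"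
proof -
  have "\<alpha> / Gamma (1 - \<alpha>) \<ge> 0" using assms Gamma_real_pos[of "1 - \<alpha>"] by simp
  then have "ennreal (stable_levy_density \<alpha> u * f u)
      = ennreal (\<alpha> / Gamma (1 - \<alpha>)) * ennreal (indicator {0<..} u * u powr (- \<alpha> - 1) * f u)" for u
    by (simp add: stable_levy_density_def mult.assoc flip: ennreal_mult')
  then show ?thesis by (simp add: nn_integral_cmult)
qed

lemma nn_integral_stable_levy_density:
  assumes \<alpha>: "0 < \<alpha>" "\<alpha> < 1" and c: "c \<ge> 0"
  shows "(\<integral>\<^sup>+u. ennreal (stable_levy_density \<alpha> u * (1 - exp (- (c * u)))) \<partial>lborel) = ennreal (c powr \<alpha>)"
proof -
  have "Gamma (1 - \<alpha>) > 0" using \<alpha> by (intro Gamma_real_pos) simp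
  then have "Gamma (1 - \<alpha>) \<noteq> 0" by simp
  then show ?thesis
    using \<alpha> c by (simp add: nn_integral_stable_levy_density_mult nn_integral_powr_one_minus_exp
                       flip: ennreal_mult')
qed

section \<open>The Levy measure of the subordinated process\<close>

definition total_jumps :: "nat \<Rightarrow> (nat \<Rightarrow> nat) \<Rightarrow> (nat \<Rightarrow> nat \<Rightarrow> nat) \<Rightarrow> nat" where
  "total_jumps q k f = (\<Sum>i=1..q. \<Sum>j=1..k i. f i j)"

definition jump_weight :: "nat \<Rightarrow> (nat \<Rightarrow> nat) \<Rightarrow> (nat \<Rightarrow> nat \<Rightarrow> real) \<Rightarrow> (nat \<Rightarrow> nat \<Rightarrow> nat) \<Rightarrow> real" where
  "jump_weight q k lam f = (\<Prod>i=1..q. \<Prod>j=1..k i. lam i j ^ f i j / fact (f i j))"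

lemma jump_weight_nonneg:
  assumes "\<And>i j. i \<in> {1..q} \<Longrightarrow> j \<in> {1..k i} \<Longrightarrow> lam i j \<ge> 0"
  shows "jump_weight q k lam f \<ge> 0"
  unfolding jump_weight_def using assms by (intro prod_nonneg divide_nonneg_nonneg zero_le_power) auto

lemma mgcp_pmf_expand:
  "mgcp_pmf q k lam u n = (\<Sum>f\<in>Omega_fam q k n.
     u ^ total_jumps q k f * exp (- (lam_total q k lam * u)) * jump_weight q k lam f)"
proof -
  have "mgcp_pmf q k lam u n = (\<Sum>f\<in>Omega_fam q k n.
      \<Prod>i=1..q. \<Prod>j=1..k i. (lam i j * u) ^ f i j / fact (f i j) * exp (- lam i j * u))"
    unfolding mgcp_pmf_def Omega_fam_def by (rule prod_sum_PiE) (auto intro: finite_Omega)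
  also have "\<dots> = (\<Sum>f\<in>Omega_fam q k n.
      u ^ total_jumps q k f * exp (- (lam_total q k lam * u)) * jump_weight q k lam f)"
  proof (intro sum.cong refl)
    fix f :: "nat \<Rightarrow> nat \<Rightarrow> nat"
    have "(\<Prod>i=1..q. \<Prod>j=1..k i. (lam i j * u) ^ f i j / fact (f i j) * exp (- lam i j * u))
        = (\<Prod>i=1..q. \<Prod>j=1..k i. u ^ f i j * exp (- (lam i j * u)) * (lam i j ^ f i j / fact (f i j)))"
      by (intro prod.cong refl) (simp add: power_mult_distrib)
    also have "\<dots> = (\<Prod>i=1..q. \<Prod>j=1..k i. u ^ f i j) * (\<Prod>i=1..q. \<Prod>j=1..k i. exp (- (lam i j * u)))
        * jump_weight q k lam f"
      by (simp only: prod.distrib jump_weight_def)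
    also have "(\<Prod>i=1..q. \<Prod>j=1..k i. u ^ f i j) = u ^ total_jumps q k f"
      by (simp add: power_sum total_jumps_def)
    also have "(\<Prod>i=1..q. \<Prod>j=1..k i. exp (- (lam i j * u))) = exp (- (lam_total q k lam * u))"
      by (simp add: exp_sum sum_distrib_right lam_total_def flip: sum_negf)
    finally show "(\<Prod>i=1..q. \<Prod>j=1..k i. (lam i j * u) ^ f i j / fact (f i j) * exp (- lam i j * u))
        = u ^ total_jumps q k f * exp (- (lam_total q k lam * u)) * jump_weight q k lam f" .
  qed
  finally show ?thesis .
qed

lemma total_jumps_pos:
  assumes n: "n \<in> lattice q - {\<lambda>_. 0}" and f: "f \<in> Omega_fam q k n"
  shows "total_jumps q k f \<ge> 1"
proof -
  obtain i where ni: "n i \<noteq> 0" using n by auto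
  then have i: "i \<in> {1..q}" using n by (auto simp: lattice_def)
  then have fi: "f i \<in> Omega (k i) (n i)" using f by (auto simp: Omega_fam_def)
  obtain j where j: "j \<in> {1..k i}" and fij: "f i j \<noteq> 0"
  proof (rule ccontr)
    assume "\<not> thesis"
    then have "\<forall>j\<in>{1..k i}. f i j = 0" using that by blast
    then have "(\<Sum>j=1..k i. j * f i j) = 0" by simp
    then show False using fi ni by (simp add: Omega_def)
  qed
  have "f i j \<le> (\<Sum>j=1..k i. f i j)" by (rule member_le_sum) (use j in auto)
  also have "\<dots> \<le> total_jumps q k f"
    unfolding total_jumps_def by (rule member_le_sum[of i]) (use i in auto)
  finally show ?thesis using fij by simp
qed

definition subordinated_levy_mass ::
  "nat \<Rightarrow> (nat \<Rightarrow> nat) \<Rightarrow> (nat \<Rightarrow> nat \<Rightarrow> real) \<Rightarrow> real \<Rightarrow> (nat \<Rightarrow> nat) \<Rightarrow> real" where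
  "subordinated_levy_mass q k lam \<alpha> n = \<alpha> * lam_total q k lam powr \<alpha> / Gamma (1 - \<alpha>) *
     (\<Sum>f\<in>Omega_fam q k n.
        Gamma (real (\<Sum>i=1..q. \<Sum>j=1..k i. f i j) - \<alpha>) *
        (\<Prod>i=1..q. \<Prod>j=1..k i. (lam i j / lam_total q k lam) ^ f i j / fact (f i j)))"

lemma subordinated_levy_mass_nonneg:
  assumes L: "lam_total q k lam > 0" and lam: "\<And>i j. i \<in> {1..q} \<Longrightarrow> j \<in> {1..k i} \<Longrightarrow> lam i j \<ge> 0"
    and \<alpha>: "0 < \<alpha>" "\<alpha> < 1" and n: "n \<in> lattice q - {\<lambda>_. 0}"
  shows "subordinated_levy_mass q k lam \<alpha> n \<ge> 0"
  unfolding subordinated_levy_mass_def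
proof (intro mult_nonneg_nonneg sum_nonneg)
  fix f assume "f \<in> Omega_fam q k n"
  then have "real (\<Sum>i=1..q. \<Sum>j=1..k i. f i j) \<ge> 1"
    using total_jumps_pos[OF n] unfolding total_jumps_def by (metis of_nat_1 of_nat_le_iff)
  then have "real (\<Sum>i=1..q. \<Sum>j=1..k i. f i j) - \<alpha> > 0" using \<alpha> by linarith
  then show "0 \<le> Gamma (real (\<Sum>i=1..q. \<Sum>j=1..k i. f i j) - \<alpha>)"
    by (simp add: less_imp_le)
  show "0 \<le> (\<Prod>i=1..q. \<Prod>j=1..k i. (lam i j / lam_total q k lam) ^ f i j / fact (f i j))"
    using L lam by (intro prod_nonneg divide_nonneg_nonneg zero_le_power) auto
qed (use \<alpha> L Gamma_real_pos[of "1 - \<alpha>"] in auto)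

lemma subordinated_levy_mass_eq_jump_weights:
  assumes L: "lam_total q k lam > 0" and \<alpha>: "0 < \<alpha>" "\<alpha> < 1"
  shows "subordinated_levy_mass q k lam \<alpha> n * Gamma (1 - \<alpha>) / \<alpha> =
    (\<Sum>f\<in>Omega_fam q k n. jump_weight q k lam f *
       (Gamma (real (total_jumps q k f) - \<alpha>) / lam_total q k lam powr (real (total_jumps q k f) - \<alpha>)))"
proof -
  define L where "L = lam_total q k lam"
  have "Gamma (1 - \<alpha>) > 0" using \<alpha> by (intro Gamma_real_pos) simp
  then have "Gamma (1 - \<alpha>) \<noteq> 0" by simp
  then have "subordinated_levy_mass q k lam \<alpha> n * Gamma (1 - \<alpha>) / \<alpha> = L powr \<alpha> *
      (\<Sum>f\<in>Omega_fam q k n. Gamma (real (total_jumps q k f) - \<alpha>) *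
        (\<Prod>i=1..q. \<Prod>j=1..k i. (lam i j / L) ^ f i j / fact (f i j)))"
    using \<alpha> by (simp add: subordinated_levy_mass_def L_def total_jumps_def)
  also have "\<dots> = (\<Sum>f\<in>Omega_fam q k n. jump_weight q k lam f *
      (Gamma (real (total_jumps q k f) - \<alpha>) / L powr (real (total_jumps q k f) - \<alpha>)))"
    unfolding sum_distrib_left
  proof (intro sum.cong refl)
    fix f
    have "(\<Prod>i=1..q. \<Prod>j=1..k i. (lam i j / L) ^ f i j / fact (f i j))
        = (\<Prod>i=1..q. \<Prod>j=1..k i. (lam i j ^ f i j / fact (f i j)) / L ^ f i j)"
      by (intro prod.cong refl) (simp add: power_divide)
    also have "\<dots> = jump_weight q k lam f / L ^ total_jumps q k f"
      by (simp only: prod_dividef jump_weight_def total_jumps_def power_sum)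
    finally have weights: "(\<Prod>i=1..q. \<Prod>j=1..k i. (lam i j / L) ^ f i j / fact (f i j))
        = jump_weight q k lam f / L ^ total_jumps q k f" .
    have powers: "L powr (real (total_jumps q k f) - \<alpha>) = L ^ total_jumps q k f / L powr \<alpha>"
      using L by (simp add: powr_diff powr_realpow L_def)
    show "L powr \<alpha> * (Gamma (real (total_jumps q k f) - \<alpha>) *
        (\<Prod>i=1..q. \<Prod>j=1..k i. (lam i j / L) ^ f i j / fact (f i j)))
      = jump_weight q k lam f * (Gamma (real (total_jumps q k f) - \<alpha>) / L powr (real (total_jumps q k f) - \<alpha>))"
      unfolding weights powers using L by (simp add: L_def field_simps)
  qed
  finally show ?thesis by (simp add: L_def)
qed

lemma powr_mult_mgcp_pmf:
  assumes "u > 0"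
  shows "u powr (- \<alpha> - 1) * mgcp_pmf q k lam u n = (\<Sum>f\<in>Omega_fam q k n. jump_weight q k lam f *
           (u powr ((real (total_jumps q k f) - \<alpha>) - 1) * exp (- (lam_total q k lam * u))))"
proof -
  have "u powr (- \<alpha> - 1) * (u ^ total_jumps q k f * exp (- (lam_total q k lam * u)) * jump_weight q k lam f)
      = jump_weight q k lam f * (u powr ((real (total_jumps q k f) - \<alpha>) - 1) * exp (- (lam_total q k lam * u)))"
    for f
  proof -
    have "u powr (- \<alpha> - 1) * u ^ total_jumps q k f = u powr ((real (total_jumps q k f) - \<alpha>) - 1)"
      using assms by (simp add: powr_realpow[symmetric] powr_add[symmetric] algebra_simps)
    moreover have "u powr (- \<alpha> - 1) * (u ^ total_jumps q k f * exp (- (lam_total q k lam * u)) * jump_weight q k lam f)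
        = jump_weight q k lam f * ((u powr (- \<alpha> - 1) * u ^ total_jumps q k f) * exp (- (lam_total q k lam * u)))"
      by (simp only: mult_ac)
    ultimately show ?thesis by simp
  qed
  then show ?thesis by (simp only: mgcp_pmf_expand sum_distrib_left)
qed

lemma nn_integral_powr_mgcp_pmf:
  assumes L: "lam_total q k lam > 0" and lam: "\<And>i j. i \<in> {1..q} \<Longrightarrow> j \<in> {1..k i} \<Longrightarrow> lam i j \<ge> 0"
    and \<alpha>: "0 < \<alpha>" "\<alpha> < 1" and n: "n \<in> lattice q - {\<lambda>_. 0}"
  shows "(\<integral>\<^sup>+u. ennreal (indicator {0<..} u * u powr (- \<alpha> - 1) * mgcp_pmf q k lam u n) \<partial>lborel)
       = ennreal (subordinated_levy_mass q k lam \<alpha> n * Gamma (1 - \<alpha>) / \<alpha>)"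
proof -
  define L where "L = lam_total q k lam"
  define N where "N f = real (total_jumps q k f) - \<alpha>" for f
  define w where "w f = jump_weight q k lam f" for f
  have w: "w f \<ge> 0" for f unfolding w_def using lam by (rule jump_weight_nonneg)
  have N: "N f > 0" if "f \<in> Omega_fam q k n" for f
    using total_jumps_pos[OF n that] \<alpha> by (simp add: N_def)
  have "(\<integral>\<^sup>+u. ennreal (indicator {0<..} u * u powr (- \<alpha> - 1) * mgcp_pmf q k lam u n) \<partial>lborel)
      = (\<integral>\<^sup>+u. (\<Sum>f\<in>Omega_fam q k n.
           ennreal (w f) * ennreal (indicator {0<..} u * u powr (N f - 1) * exp (- (L * u)))) \<partial>lborel)"
  proof (rule nn_integral_cong)
    fix u :: real
    show "ennreal (indicator {0<..} u * u powr (- \<alpha> - 1) * mgcp_pmf q k lam u n) = (\<Sum>f\<in>Omega_fam q k n.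
        ennreal (w f) * ennreal (indicator {0<..} u * u powr (N f - 1) * exp (- (L * u))))"
      using w powr_mult_mgcp_pmf[of u \<alpha> q k lam n]
      by (cases "u > 0") (simp_all add: N_def L_def w_def ennreal_mult'' flip: sum_ennreal)
  qed
  also have "\<dots> = (\<Sum>f\<in>Omega_fam q k n.
      ennreal (w f) * (\<integral>\<^sup>+u. ennreal (indicator {0<..} u * u powr (N f - 1) * exp (- (L * u))) \<partial>lborel))"
    by (subst nn_integral_sum) (auto intro!: sum.cong nn_integral_cmult)
  also have "\<dots> = (\<Sum>f\<in>Omega_fam q k n. ennreal (w f) * ennreal (Gamma (N f) / L powr N f))"
    using N L by (intro sum.cong refl) (subst nn_integral_powr_exp_Gamma, auto simp: L_def)
  also have "\<dots> = (\<Sum>f\<in>Omega_fam q k n. ennreal (w f * (Gamma (N f) / L powr N f)))"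
    using w N Gamma_real_pos by (intro sum.cong refl ennreal_mult[symmetric]) (auto simp: less_imp_le)
  also have "\<dots> = ennreal (\<Sum>f\<in>Omega_fam q k n. w f * (Gamma (N f) / L powr N f))"
    using w N Gamma_real_pos by (intro sum_ennreal) (auto simp: less_imp_le)
  also have "\<dots> = ennreal (subordinated_levy_mass q k lam \<alpha> n * Gamma (1 - \<alpha>) / \<alpha>)"
    using subordinated_levy_mass_eq_jump_weights[OF L \<alpha>] by (simp add: w_def N_def L_def)
  finally show ?thesis .
qed

lemma subordinated_levy_mass_eq_nn_integral:
  assumes L: "lam_total q k lam > 0" and lam: "\<And>i j. i \<in> {1..q} \<Longrightarrow> j \<in> {1..k i} \<Longrightarrow> lam i j \<ge> 0"
    and \<alpha>: "0 < \<alpha>" "\<alpha> < 1" and n: "n \<in> lattice q - {\<lambda>_. 0}"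
  shows "ennreal (subordinated_levy_mass q k lam \<alpha> n)
       = (\<integral>\<^sup>+u. ennreal (stable_levy_density \<alpha> u * mgcp_pmf q k lam u n) \<partial>lborel)"
proof -
  have G: "Gamma (1 - \<alpha>) > 0" using \<alpha> by (intro Gamma_real_pos) simp
  have "(\<integral>\<^sup>+u. ennreal (stable_levy_density \<alpha> u * mgcp_pmf q k lam u n) \<partial>lborel)
      = ennreal (\<alpha> / Gamma (1 - \<alpha>))
        * (\<integral>\<^sup>+u. ennreal (indicator {0<..} u * u powr (- \<alpha> - 1) * mgcp_pmf q k lam u n) \<partial>lborel)"
    by (rule nn_integral_stable_levy_density_mult[OF \<alpha>]) measurable
  also have "\<dots> = ennreal (\<alpha> / Gamma (1 - \<alpha>)) * ennreal (subordinated_levy_mass q k lam \<alpha> n * Gamma (1 - \<alpha>) / \<alpha>)"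
    by (subst nn_integral_powr_mgcp_pmf) (use L lam \<alpha> n in auto)
  also have "\<dots> = ennreal (subordinated_levy_mass q k lam \<alpha> n)"
    using \<alpha> G less_imp_neq[OF G] by (simp flip: ennreal_mult')
  finally show ?thesis ..
qed

lemma has_sum_one_minus_laplace_mgcp:
  assumes lam: "\<And>i j. i \<in> {1..q} \<Longrightarrow> j \<in> {1..k i} \<Longrightarrow> lam i j \<ge> 0" and u: "u \<ge> 0"
  shows "((\<lambda>n. (1 - exp (- (\<Sum>i=1..q. s i * real (n i)))) * mgcp_pmf q k lam u n)
           has_sum (1 - exp (- (mgcp_laplace_exponent q k lam s * u)))) (lattice q - {\<lambda>_. 0})"
proof -
  have "((\<lambda>n. mgcp_pmf q k lam u n - mgcp_pmf q k lam u n * exp (- (\<Sum>i=1..q. s i * real (n i))))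
      has_sum (1 - exp (- u * mgcp_laplace_exponent q k lam s))) (lattice q)"
    using lam u by (intro has_sum_diff has_sum_mgcp_pmf has_sum_mgcp_laplace)
  then show ?thesis
    by (subst has_sum_cong_neutral) (auto simp: algebra_simps)
qed

lemma nn_integral_one_minus_laplace_mgcp:
  assumes lam: "\<And>i j. i \<in> {1..q} \<Longrightarrow> j \<in> {1..k i} \<Longrightarrow> lam i j \<ge> 0"
    and s: "\<And>i. i \<in> {1..q} \<Longrightarrow> s i \<ge> 0" and u: "u \<ge> 0" and c: "c \<ge> 0"
  shows "(\<integral>\<^sup>+n. ennreal (c * ((1 - exp (- (\<Sum>i=1..q. s i * real (n i)))) * mgcp_pmf q k lam u n))
            \<partial>count_space (lattice q - {\<lambda>_. 0}))
       = ennreal (c * (1 - exp (- (mgcp_laplace_exponent q k lam s * u))))"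
proof (rule nn_integral_count_space_has_sum)
  show "((\<lambda>n. c * ((1 - exp (- (\<Sum>i=1..q. s i * real (n i)))) * mgcp_pmf q k lam u n)) has_sum
      c * (1 - exp (- (mgcp_laplace_exponent q k lam s * u)))) (lattice q - {\<lambda>_. 0})"
    using lam u by (intro has_sum_cmult_right has_sum_one_minus_laplace_mgcp)
  have "exp (- (\<Sum>i=1..q. s i * real (n i))) \<le> 1" for n :: "nat \<Rightarrow> nat"
    using s by (auto intro!: sum_nonneg mult_nonneg_nonneg)
  then show "0 \<le> c * ((1 - exp (- (\<Sum>i=1..q. s i * real (n i)))) * mgcp_pmf q k lam u n)" for n
    using c u lam by (intro mult_nonneg_nonneg mgcp_pmf_nonneg) auto
qed

lemma has_sum_subordinated_levy_mass:
  assumes L: "lam_total q k lam > 0" and lam: "\<And>i j. i \<in> {1..q} \<Longrightarrow> j \<in> {1..k i} \<Longrightarrow> lam i j \<ge> 0"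
    and \<alpha>: "0 < \<alpha>" "\<alpha> < 1" and s: "\<And>i. i \<in> {1..q} \<Longrightarrow> s i \<ge> 0"
  shows "((\<lambda>n. (1 - exp (- (\<Sum>i=1..q. s i * real (n i)))) * subordinated_levy_mass q k lam \<alpha> n)
           has_sum mgcp_laplace_exponent q k lam s powr \<alpha>) (lattice q - {\<lambda>_. 0})"
proof -
  define S where "S = lattice q - {\<lambda>_. 0}"
  define E where "E n = exp (- (\<Sum>i=1..q. s i * real (n i)))" for n :: "nat \<Rightarrow> nat"
  define \<nu> where "\<nu> = stable_levy_density \<alpha>"
  define \<phi> where "\<phi> = mgcp_laplace_exponent q k lam s"
  define F where "F n u = ennreal (\<nu> u * ((1 - E n) * mgcp_pmf q k lam u n))" for n u
  have E: "E n \<le> 1" for n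
    unfolding E_def using s by (auto intro!: sum_nonneg mult_nonneg_nonneg)
  have \<nu>: "\<nu> u \<ge> 0" for u
    using \<alpha> Gamma_real_pos[of "1 - \<alpha>"] by (simp add: \<nu>_def stable_levy_density_def)
  have \<phi>: "\<phi> \<ge> 0" unfolding \<phi>_def using lam s by (rule mgcp_laplace_exponent_nonneg)
  have "(\<integral>\<^sup>+u. F n u \<partial>lborel) = ennreal ((1 - E n) * subordinated_levy_mass q k lam \<alpha> n)"
    if n: "n \<in> S" for n
  proof -
    have "F n u = ennreal (1 - E n) * ennreal (\<nu> u * mgcp_pmf q k lam u n)" for u
      unfolding F_def using E[of n] by (subst ennreal_mult'[symmetric]) (simp_all add: mult_ac)
    then have "(\<integral>\<^sup>+u. F n u \<partial>lborel) = ennreal (1 - E n) * (\<integral>\<^sup>+u. ennreal (\<nu> u * mgcp_pmf q k lam u n) \<partial>lborel)"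
      by (simp add: nn_integral_cmult \<nu>_def stable_levy_density_def)
    also have "\<dots> = ennreal ((1 - E n) * subordinated_levy_mass q k lam \<alpha> n)"
      using subordinated_levy_mass_eq_nn_integral[OF L lam \<alpha>] n E[of n]
      by (simp add: S_def \<nu>_def ennreal_mult')
    finally show ?thesis .
  qed
  then have "(\<integral>\<^sup>+n. ennreal ((1 - E n) * subordinated_levy_mass q k lam \<alpha> n) \<partial>count_space S)
      = (\<integral>\<^sup>+n. (\<integral>\<^sup>+u. F n u \<partial>lborel) \<partial>count_space S)"
    by (intro nn_integral_cong) simp
  also have "\<dots> = (\<integral>\<^sup>+u. (\<integral>\<^sup>+n. F n u \<partial>count_space S) \<partial>lborel)"
    using countable_lattice unfolding S_def
    by (intro nn_integral_count_space_nn_integral[symmetric]) (auto simp: F_def \<nu>_def stable_levy_density_def)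
  also have "\<dots> = (\<integral>\<^sup>+u. ennreal (\<nu> u * (1 - exp (- (\<phi> * u)))) \<partial>lborel)"
  proof (intro nn_integral_cong)
    fix u :: real
    show "(\<integral>\<^sup>+n. F n u \<partial>count_space S) = ennreal (\<nu> u * (1 - exp (- (\<phi> * u))))"
    proof (cases "u > 0")
      case True
      then show ?thesis unfolding F_def S_def E_def \<phi>_def
        using lam s \<nu> by (intro nn_integral_one_minus_laplace_mgcp) auto
    qed (simp add: F_def \<nu>_def stable_levy_density_def)
  qed
  also have "\<dots> = ennreal (\<phi> powr \<alpha>)"
    unfolding \<nu>_def using \<alpha> \<phi> by (rule nn_integral_stable_levy_density)
  finally have "((\<lambda>n. (1 - E n) * subordinated_levy_mass q k lam \<alpha> n) has_sum \<phi> powr \<alpha>) S"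
    using E subordinated_levy_mass_nonneg[OF L lam \<alpha>]
    by (intro has_sum_nn_integral_count_space) (auto simp: S_def)
  then show ?thesis by (simp add: S_def E_def \<phi>_def)
qed

lemma subordinated_levy_mass_summable:
  assumes L: "lam_total q k lam > 0" and lam: "\<And>i j. i \<in> {1..q} \<Longrightarrow> j \<in> {1..k i} \<Longrightarrow> lam i j \<ge> 0"
    and \<alpha>: "0 < \<alpha>" "\<alpha> < 1"
  shows "subordinated_levy_mass q k lam \<alpha> summable_on (lattice q - {\<lambda>_. 0})"
proof -
  define S where "S = lattice q - {\<lambda>_. 0}"
  define E where "E n = exp (- (\<Sum>i=1..q. ln 2 * real (n i)))" for n :: "nat \<Rightarrow> nat"
  have "((\<lambda>n. (1 - E n) * subordinated_levy_mass q k lam \<alpha> n) has_sum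
      mgcp_laplace_exponent q k lam (\<lambda>_. ln 2) powr \<alpha>) S"
    unfolding S_def E_def using L lam \<alpha> by (intro has_sum_subordinated_levy_mass) auto
  then have "(\<lambda>n. 2 * ((1 - E n) * subordinated_levy_mass q k lam \<alpha> n)) summable_on S"
    by (intro summable_on_cmult_right) (auto simp: summable_on_def)
  \<comment> \<open>\<open>E n = 2 ^ (- \<Sum>i. n i) \<le> 1/2\<close> away from the origin\<close>
  moreover have "norm (subordinated_levy_mass q k lam \<alpha> n) \<le> 2 * ((1 - E n) * subordinated_levy_mass q k lam \<alpha> n)"
    if n: "n \<in> S" for n
  proof -
    obtain i where ni: "n i \<noteq> 0" using n by (auto simp: S_def)
    then have i: "i \<in> {1..q}" using n by (auto simp: S_def lattice_def)
    have "ln 2 \<le> ln 2 * real (n i)" using ni by simp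
    also have "\<dots> \<le> (\<Sum>i=1..q. ln 2 * real (n i))" by (rule member_le_sum) (use i in auto)
    finally have "E n \<le> exp (- ln 2)" unfolding E_def by simp
    then have "E n \<le> 1 / 2" by (simp add: exp_minus)
    moreover have nonneg: "subordinated_levy_mass q k lam \<alpha> n \<ge> 0"
      using n subordinated_levy_mass_nonneg[OF L lam \<alpha>] by (simp add: S_def)
    ultimately have "1 / 2 * subordinated_levy_mass q k lam \<alpha> n \<le> (1 - E n) * subordinated_levy_mass q k lam \<alpha> n"
      by (intro mult_right_mono) auto
    then show ?thesis using nonneg by simp
  qed
  ultimately have "(\<lambda>n. norm (subordinated_levy_mass q k lam \<alpha> n)) summable_on S"
    by (rule Infinite_Sum.abs_summable_on_comparison_test')
  then show ?thesis
    unfolding S_def by (rule summable_on_iff_abs_summable_on_real[THEN iffD2])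
qed

section \<open>The Laplace transform of the subordinated process\<close>

lemma subordinated_pmf_eq_nn_integral:
  assumes lam: "\<And>i j. i \<in> {1..q} \<Longrightarrow> j \<in> {1..k i} \<Longrightarrow> lam i j \<ge> 0"
    and \<mu>: "stable_subordinator_laws \<alpha> \<mu>" and t: "t \<ge> 0" and n: "n \<in> lattice q"
  shows "ennreal (subordinated_pmf q k lam \<mu> t n) = (\<integral>\<^sup>+u. ennreal (mgcp_pmf q k lam u n) \<partial>\<mu> t)"
proof -
  interpret prob_space "\<mu> t" using \<mu> t by (simp add: stable_subordinator_laws_def)
  have sets: "sets (\<mu> t) = sets borel" and AE_nonneg: "AE u in \<mu> t. 0 \<le> u"
    using \<mu> t by (auto simp: stable_subordinator_laws_def)
  have bounds: "AE u in \<mu> t. 0 \<le> mgcp_pmf q k lam u n \<and> mgcp_pmf q k lam u n \<le> 1"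
    using AE_nonneg by eventually_elim (use lam n in \<open>auto intro: mgcp_pmf_nonneg mgcp_pmf_le_1\<close>)
  have meas_eq: "borel_measurable (\<mu> t) = borel_measurable borel"
    by (rule measurable_cong_sets[OF sets refl])
  have meas: "(\<lambda>u. mgcp_pmf q k lam u n) \<in> borel_measurable (\<mu> t)"
    unfolding meas_eq by measurable
  have "AE u in \<mu> t. norm (mgcp_pmf q k lam u n) \<le> norm (1::real)"
    using bounds by eventually_elim auto
  then have "integrable (\<mu> t) (\<lambda>u. mgcp_pmf q k lam u n)"
    by (rule Bochner_Integration.integrable_bound[OF integrable_const[of 1] meas])
  then show ?thesis
    unfolding subordinated_pmf_def using bounds
    by (intro nn_integral_eq_integral[symmetric]) auto
qed

lemma nn_integral_subordinated_pmf_laplace: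
  assumes lam: "\<And>i j. i \<in> {1..q} \<Longrightarrow> j \<in> {1..k i} \<Longrightarrow> lam i j \<ge> 0"
    and \<mu>: "stable_subordinator_laws \<alpha> \<mu>" and t: "t \<ge> 0"
  shows "(\<integral>\<^sup>+n. ennreal (subordinated_pmf q k lam \<mu> t n * exp (- (\<Sum>i=1..q. s i * real (n i))))
            \<partial>count_space (lattice q))
       = (\<integral>\<^sup>+u. ennreal (exp (- mgcp_laplace_exponent q k lam s * u)) \<partial>\<mu> t)"
proof -
  define E where "E n = exp (- (\<Sum>i=1..q. s i * real (n i)))" for n :: "nat \<Rightarrow> nat"
  have sets: "sets (\<mu> t) = sets borel" and AE_nonneg: "AE u in \<mu> t. 0 \<le> u"
    using \<mu> t by (auto simp: stable_subordinator_laws_def)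
  have meas: "borel_measurable (\<mu> t) = borel_measurable borel"
    by (rule measurable_cong_sets[OF sets refl])
  have "(\<integral>\<^sup>+n. ennreal (subordinated_pmf q k lam \<mu> t n * E n) \<partial>count_space (lattice q))
      = (\<integral>\<^sup>+n. (\<integral>\<^sup>+u. ennreal (mgcp_pmf q k lam u n * E n) \<partial>\<mu> t) \<partial>count_space (lattice q))"
  proof (rule nn_integral_cong)
    fix n assume "n \<in> space (count_space (lattice q))"
    then have "ennreal (subordinated_pmf q k lam \<mu> t n) = (\<integral>\<^sup>+u. ennreal (mgcp_pmf q k lam u n) \<partial>\<mu> t)"
      using lam \<mu> t by (intro subordinated_pmf_eq_nn_integral) auto
    then show "ennreal (subordinated_pmf q k lam \<mu> t n * E n) = (\<integral>\<^sup>+u. ennreal (mgcp_pmf q k lam u n * E n) \<partial>\<mu> t)"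
      by (simp add: E_def ennreal_mult'' nn_integral_multc meas)
  qed
  also have "\<dots> = (\<integral>\<^sup>+u. (\<integral>\<^sup>+n. ennreal (mgcp_pmf q k lam u n * E n) \<partial>count_space (lattice q)) \<partial>\<mu> t)"
    by (rule nn_integral_count_space_nn_integral[symmetric, OF countable_lattice])
       (unfold E_def meas, measurable)
  also have "\<dots> = (\<integral>\<^sup>+u. ennreal (exp (- mgcp_laplace_exponent q k lam s * u)) \<partial>\<mu> t)"
    using AE_nonneg
  proof (intro nn_integral_cong_AE, eventually_elim)
    case (elim u)
    have "((\<lambda>n. mgcp_pmf q k lam u n * E n) has_sum exp (- u * mgcp_laplace_exponent q k lam s)) (lattice q)"
      unfolding E_def by (rule has_sum_mgcp_laplace) (use lam elim in auto)
    then show ?case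
      using mgcp_pmf_nonneg[of q k lam u] lam elim
      by (subst nn_integral_count_space_has_sum) (auto simp: E_def mult.commute)
  qed
  finally show ?thesis by (simp add: E_def)
qed

lemma has_sum_subordinated_pmf_laplace:
  assumes lam: "\<And>i j. i \<in> {1..q} \<Longrightarrow> j \<in> {1..k i} \<Longrightarrow> lam i j \<ge> 0"
    and \<mu>: "stable_subordinator_laws \<alpha> \<mu>" and t: "t \<ge> 0"
    and s: "\<And>i. i \<in> {1..q} \<Longrightarrow> s i \<ge> 0"
  shows "((\<lambda>n. subordinated_pmf q k lam \<mu> t n * exp (- (\<Sum>i=1..q. s i * real (n i))))
          has_sum exp (- t * mgcp_laplace_exponent q k lam s powr \<alpha>)) (lattice q)"
proof -
  define \<phi> where "\<phi> = mgcp_laplace_exponent q k lam s"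
  interpret prob_space "\<mu> t" using \<mu> t by (simp add: stable_subordinator_laws_def)
  have \<phi>: "\<phi> \<ge> 0" unfolding \<phi>_def using lam s by (rule mgcp_laplace_exponent_nonneg)
  have sets: "sets (\<mu> t) = sets borel" and AE_nonneg: "AE u in \<mu> t. 0 \<le> u"
    and laplace: "(\<integral>u. exp (- \<phi> * u) \<partial>\<mu> t) = exp (- t * \<phi> powr \<alpha>)"
    using \<mu> t \<phi> by (auto simp: stable_subordinator_laws_def)
  have "(\<lambda>u. exp (- \<phi> * u)) \<in> borel_measurable (\<mu> t)"
    unfolding measurable_cong_sets[OF sets refl] by measurable
  moreover have "AE u in \<mu> t. norm (exp (- \<phi> * u)) \<le> norm (1::real)"
    using AE_nonneg by eventually_elim (use \<phi> in auto)
  ultimately have "integrable (\<mu> t) (\<lambda>u. exp (- \<phi> * u))"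
    by (rule Bochner_Integration.integrable_bound[OF integrable_const[of 1]])
  then have "(\<integral>\<^sup>+n. ennreal (subordinated_pmf q k lam \<mu> t n * exp (- (\<Sum>i=1..q. s i * real (n i))))
      \<partial>count_space (lattice q)) = ennreal (exp (- t * \<phi> powr \<alpha>))"
    using nn_integral_subordinated_pmf_laplace[OF lam \<mu> t] laplace
    by (simp add: \<phi>_def nn_integral_eq_integral)
  moreover have "AE u in \<mu> t. 0 \<le> mgcp_pmf q k lam u n" for n
    using AE_nonneg by eventually_elim (use lam in \<open>auto intro: mgcp_pmf_nonneg\<close>)
  then have "subordinated_pmf q k lam \<mu> t n \<ge> 0" for n
    unfolding subordinated_pmf_def by (rule integral_nonneg_AE)
  ultimately show ?thesis unfolding \<phi>_def
    by (intro has_sum_nn_integral_count_space) (auto intro!: mult_nonneg_nonneg)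
qed

section \<open>Uniqueness of the Levy measure\<close>

definition nth_prime :: "nat \<Rightarrow> nat" where
  "nth_prime i = enumerate {p. prime p} i"

lemma prime_nth_prime: "prime (nth_prime i)"
  using enumerate_in_set[OF primes_infinite] by (simp add: nth_prime_def)

lemma inj_nth_prime: "inj nth_prime"
  unfolding nth_prime_def using primes_infinite
  by (intro strict_mono_imp_inj_on strict_monoI) (simp add: enumerate_mono)

definition prime_code :: "nat \<Rightarrow> (nat \<Rightarrow> nat) \<Rightarrow> nat" where
  "prime_code q n = (\<Prod>i=1..q. nth_prime i ^ n i)"

lemma multiplicity_prime_code:
  assumes i: "i \<in> {1..q}"
  shows "multiplicity (nth_prime i) (prime_code q n) = n i"
proof -
  have inj: "inj_on nth_prime {1..q}" using inj_nth_prime by (rule inj_on_subset) simp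
  define g where "g p = n (inv_into {1..q} nth_prime p)" for p
  have "prime_code q n = (\<Prod>p\<in>nth_prime ` {1..q}. p ^ g p)"
    unfolding prime_code_def prod.reindex[OF inj] using inj by (simp add: g_def)
  also have "multiplicity (nth_prime i) \<dots> = g (nth_prime i)"
    using i by (subst multiplicity_prod_prime_powers) (auto simp: prime_nth_prime)
  also have "\<dots> = n i" using i inj by (simp add: g_def)
  finally show ?thesis .
qed

lemma inj_on_prime_code: "inj_on (prime_code q) (lattice q)"
proof (rule inj_onI)
  fix n n' assume n: "n \<in> lattice q" and n': "n' \<in> lattice q" and eq: "prime_code q n = prime_code q n'"
  show "n = n'"
  proof
    fix i show "n i = n' i"
      using multiplicity_prime_code[of i q n] multiplicity_prime_code[of i q n'] eq n n'
      by (cases "i \<in> {1..q}") (auto simp: lattice_def)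
  qed
qed

lemma prime_code_ge_2:
  assumes n: "n \<in> lattice q - {\<lambda>_. 0}"
  shows "prime_code q n \<ge> 2"
proof -
  obtain i where ni: "n i \<noteq> 0" using n by auto
  then have i: "i \<in> {1..q}" using n by (auto simp: lattice_def)
  have "2 \<le> nth_prime i" using prime_nth_prime by (rule prime_ge_2_nat)
  also have "\<dots> \<le> nth_prime i ^ n i" using ni prime_nth_prime[of i]
    by (metis One_nat_def Suc_leI not_gr_zero prime_gt_0_nat self_le_power)
  also have "\<dots> \<le> prime_code q n"
    unfolding prime_code_def using i prime_nth_prime
    by (intro dvd_imp_le dvd_prodI prod_pos) (auto intro: prime_gt_0_nat)
  finally show ?thesis .
qed

lemma exp_prime_code:
  "exp (- (\<Sum>i=1..q. real \<sigma> * ln (real (nth_prime i)) * real (n i))) = (1 / real (prime_code q n)) ^ \<sigma>"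
proof -
  have pos: "real (nth_prime i) > 0" for i using prime_nth_prime[of i] by (simp add: prime_gt_0_nat)
  have "ln (real (prime_code q n)) = (\<Sum>i=1..q. real (n i) * ln (real (nth_prime i)))"
    unfolding prime_code_def of_nat_prod of_nat_power using pos
    by (simp add: ln_prod ln_realpow prod_pos)
  then have "exp (- (\<Sum>i=1..q. real \<sigma> * ln (real (nth_prime i)) * real (n i)))
      = exp (- ln (real (prime_code q n))) ^ \<sigma>"
    by (simp add: sum_distrib_left mult_ac flip: exp_of_nat_mult)
  also have "exp (- ln (real (prime_code q n))) = 1 / real (prime_code q n)"
    using pos by (simp add: exp_minus inverse_eq_divide prime_code_def prod_pos)
  finally show ?thesis .
qed

lemma lattice_levy_measure_unique:
  fixes \<pi> \<pi>' :: "(nat \<Rightarrow> nat) \<Rightarrow> real"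
  assumes summ: "\<pi> summable_on (lattice q - {\<lambda>_. 0})" and summ': "\<pi>' summable_on (lattice q - {\<lambda>_. 0})"
    and eq: "\<And>s. (\<And>i. i \<in> {1..q} \<Longrightarrow> s i \<ge> 0) \<Longrightarrow>
      (\<Sum>\<^sub>\<infinity>n\<in>lattice q - {\<lambda>_. 0}. (1 - exp (- (\<Sum>i=1..q. s i * real (n i)))) * \<pi> n) =
      (\<Sum>\<^sub>\<infinity>n\<in>lattice q - {\<lambda>_. 0}. (1 - exp (- (\<Sum>i=1..q. s i * real (n i)))) * \<pi>' n)"
    and n: "n \<in> lattice q - {\<lambda>_. 0}"
  shows "\<pi> n = \<pi>' n"
proof -
  define S where "S = lattice q - {\<lambda>_. 0}"
  have "\<pi> n - \<pi>' n = 0"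
  proof (rule dirichlet_series_unique[where d="\<lambda>n. \<pi> n - \<pi>' n" and S=S and m="prime_code q"])
    show "(\<lambda>n. \<pi> n - \<pi>' n) summable_on S"
      using has_sum_diff[OF has_sum_infsum[OF summ] has_sum_infsum[OF summ']]
      by (auto simp: summable_on_def S_def)
    show "inj_on (prime_code q) S" unfolding S_def by (rule inj_on_subset[OF inj_on_prime_code]) auto
    show "\<And>n. n \<in> S \<Longrightarrow> 2 \<le> prime_code q n" unfolding S_def by (rule prime_code_ge_2)
    show "n \<in> S" using n by (simp add: S_def)
  next
    fix \<sigma> :: nat
    \<comment> \<open>at \<open>s i = \<sigma> ln p\<^sub>i\<close> the Laplace exponent is a Dirichlet series in the prime codes\<close>
    define s where "s i = real \<sigma> * ln (real (nth_prime i))" for i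
    have s: "s i \<ge> 0" for i
      using prime_ge_2_nat[OF prime_nth_prime[of i]] by (simp add: s_def)
    have E: "exp (- (\<Sum>i=1..q. s i * real (n i))) = (1 / real (prime_code q n)) ^ \<sigma>" for n
      unfolding s_def by (rule exp_prime_code)
    have "\<bar>1 - (1 / real (prime_code q n)) ^ \<sigma>\<bar> \<le> 1" for n
      by (cases "prime_code q n = 0") (auto simp: power_le_one)
    then have summ_c: "(\<lambda>n. (1 - (1 / real (prime_code q n)) ^ \<sigma>) * p n) summable_on S"
      if "p summable_on S" for p
      by (rule summable_on_bounded_mult[OF that])
    have eq_c: "(\<Sum>\<^sub>\<infinity>n\<in>S. (1 - (1 / real (prime_code q n)) ^ \<sigma>) * \<pi> n)
        = (\<Sum>\<^sub>\<infinity>n\<in>S. (1 - (1 / real (prime_code q n)) ^ \<sigma>) * \<pi>' n)"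
      using eq[of s] s unfolding E S_def by simp
    have "(\<Sum>\<^sub>\<infinity>n\<in>S. (1 - (1 / real (prime_code q n)) ^ \<sigma>) * (\<pi> n - \<pi>' n))
        = (\<Sum>\<^sub>\<infinity>n\<in>S. (1 - (1 / real (prime_code q n)) ^ \<sigma>) * \<pi> n
                    - (1 - (1 / real (prime_code q n)) ^ \<sigma>) * \<pi>' n)"
      by (simp add: algebra_simps)
    also have "\<dots> = 0"
      using summ summ' eq_c unfolding S_def[symmetric] by (subst infsum_diff) (auto intro: summ_c)
    finally show "(\<Sum>\<^sub>\<infinity>n\<in>S. (1 - (1 / real (prime_code q n)) ^ \<sigma>) * (\<pi> n - \<pi>' n)) = 0" .
  qed
  then show ?thesis by simp
qed

lemma levy_measure_eq_subordinated_levy_mass: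
  assumes L: "lam_total q k lam > 0" and lam: "\<And>i j. i \<in> {1..q} \<Longrightarrow> j \<in> {1..k i} \<Longrightarrow> lam i j \<ge> 0"
    and \<alpha>: "0 < \<alpha>" "\<alpha> < 1" and \<mu>: "stable_subordinator_laws \<alpha> \<mu>"
    and levy: "is_levy_measure q (subordinated_pmf q k lam \<mu>) \<pi>"
    and n: "n \<in> lattice q - {\<lambda>_. 0}"
  shows "\<pi> n = subordinated_levy_mass q k lam \<alpha> n"
proof (rule lattice_levy_measure_unique[OF _ subordinated_levy_mass_summable[OF L lam \<alpha>] _ n])
  show "\<pi> summable_on (lattice q - {\<lambda>_. 0})"
    using levy by (simp add: is_levy_measure_def)
next
  fix s :: "nat \<Rightarrow> real" assume s: "\<And>i. i \<in> {1..q} \<Longrightarrow> s i \<ge> 0"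
  have "exp (- 1 * (\<Sum>\<^sub>\<infinity>n\<in>lattice q - {\<lambda>_. 0}. (1 - exp (- (\<Sum>i=1..q. s i * real (n i)))) * \<pi> n))
      = (\<Sum>\<^sub>\<infinity>n\<in>lattice q. subordinated_pmf q k lam \<mu> 1 n * exp (- (\<Sum>i=1..q. s i * real (n i))))"
    using levy s by (simp add: is_levy_measure_def)
  also have "\<dots> = exp (- 1 * mgcp_laplace_exponent q k lam s powr \<alpha>)"
    using lam \<mu> s by (intro infsumI has_sum_subordinated_pmf_laplace) auto
  also have "mgcp_laplace_exponent q k lam s powr \<alpha>
      = (\<Sum>\<^sub>\<infinity>n\<in>lattice q - {\<lambda>_. 0}. (1 - exp (- (\<Sum>i=1..q. s i * real (n i)))) * subordinated_levy_mass q k lam \<alpha> n)"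
    using L lam \<alpha> s by (intro infsumI[symmetric] has_sum_subordinated_levy_mass) auto
  finally show "(\<Sum>\<^sub>\<infinity>n\<in>lattice q - {\<lambda>_. 0}. (1 - exp (- (\<Sum>i=1..q. s i * real (n i)))) * \<pi> n)
      = (\<Sum>\<^sub>\<infinity>n\<in>lattice q - {\<lambda>_. 0}. (1 - exp (- (\<Sum>i=1..q. s i * real (n i)))) * subordinated_levy_mass q k lam \<alpha> n)"
    by simp
qed

lemma prod_if_one_zero:
  "finite I \<Longrightarrow> (\<Prod>i\<in>I. if P i then 1 else 0 :: 'a::comm_semiring_1) = (if \<forall>i\<in>I. P i then 1 else 0)"
  by (induction I rule: finite_induct) auto

theorem mainTheorem4:
  fixes q :: nat and k :: "nat \<Rightarrow> nat" and lam :: "nat \<Rightarrow> nat \<Rightarrow> real"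
    and \<alpha> :: real and \<mu> :: "real \<Rightarrow> real measure" and \<pi> :: "(nat \<Rightarrow> nat) \<Rightarrow> real"
    and A :: "nat \<Rightarrow> nat set"
  assumes "q \<ge> 1"
    and "\<And>i. i \<in> {1..q} \<Longrightarrow> k i \<ge> 1"
    and "\<And>i j. i \<in> {1..q} \<Longrightarrow> j \<in> {1..k i} \<Longrightarrow> lam i j > 0"
    and "0 < \<alpha>" and "\<alpha> < 1"
    and "stable_subordinator_laws \<alpha> \<mu>"
    and "is_levy_measure q (subordinated_pmf q k lam \<mu>) \<pi>"
  shows "levy_measure_of q \<pi> {n. \<forall>i\<in>{1..q}. n i \<in> A i} =
    \<alpha> * lam_total q k lam powr \<alpha> / Gamma (1 - \<alpha>) *
    (\<Sum>\<^sub>\<infinity>n\<in>lattice q - {\<lambda>_. 0}.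
       (\<Sum>f\<in>Omega_fam q k n.
          Gamma (real (\<Sum>i=1..q. \<Sum>j=1..k i. f i j) - \<alpha>) *
          (\<Prod>i=1..q. (\<Prod>j=1..k i.
             (lam i j / lam_total q k lam) ^ f i j / fact (f i j)) *
             (if n i \<in> A i then 1 else 0))))"
proof -
  have lam: "lam i j \<ge> 0" if "i \<in> {1..q}" "j \<in> {1..k i}" for i j
    using assms(3)[OF that] by simp
  have L: "lam_total q k lam > 0"
    unfolding lam_total_def using assms(1-3) by (intro sum_pos) auto
  define c where "c = \<alpha> * lam_total q k lam powr \<alpha> / Gamma (1 - \<alpha>)"
  define T where "T n = (\<Sum>f\<in>Omega_fam q k n. Gamma (real (\<Sum>i=1..q. \<Sum>j=1..k i. f i j) - \<alpha>) *
      (\<Prod>i=1..q. \<Prod>j=1..k i. (lam i j / lam_total q k lam) ^ f i j / fact (f i j)))" for n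
  define B where "B = {n. \<forall>i\<in>{1..q}. n i \<in> A i}"
  have "\<pi> n = c * T n" if "n \<in> lattice q - {\<lambda>_. 0}" for n
    using levy_measure_eq_subordinated_levy_mass[OF L lam assms(4-7) that]
    by (simp add: subordinated_levy_mass_def c_def T_def)
  then have "levy_measure_of q \<pi> B = (\<Sum>\<^sub>\<infinity>n\<in>lattice q - {\<lambda>_. 0}. (if n \<in> B then 1 else 0) * (c * T n))"
    unfolding levy_measure_of_def by (intro infsum_cong_neutral) auto
  also have "\<dots> = c * (\<Sum>\<^sub>\<infinity>n\<in>lattice q - {\<lambda>_. 0}. (if n \<in> B then 1 else 0) * T n)"
    by (subst infsum_cmult_right'[symmetric]) (simp add: mult_ac)
  also have "(\<lambda>n. (if n \<in> B then 1 else 0) * T n) = (\<lambda>n. \<Sum>f\<in>Omega_fam q k n.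
      Gamma (real (\<Sum>i=1..q. \<Sum>j=1..k i. f i j) - \<alpha>) * (\<Prod>i=1..q. (\<Prod>j=1..k i.
        (lam i j / lam_total q k lam) ^ f i j / fact (f i j)) * (if n i \<in> A i then 1 else 0)))"
    by (simp add: fun_eq_iff T_def B_def prod.distrib prod_if_one_zero sum_distrib_left mult_ac)
  finally show ?thesis by (simp add: B_def c_def)
qed

end
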